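(* For all integers $n\ge0$: \begin{align*} pl_2(2n+1)&\equiv pl_2(2n)\pmod 2,\\ pl_3(3n+2)&\equiv 0\pmod 3,\\ pl_3(3n+1)&\equiv pl_3(3n)\pmod 3,\\ pl_5(5n+2)&\equiv pl_5(5n+4)\pmod 5,\\ pl_5(5n+1)&\equiv pl_5(5n+3)\pmod 5,\\ pl_7(7n+2)+pl_7(7n+3)&\equiv pl_7(7n+4)+pl_7(7n+5)\pmod 7. \end{align*}
   Context: For a positive integer $k$, $pl_k(n)$ denotes the number of $k$-component plane partitions of $n$ (plane partitions of $n$ all of whose entries are $\le k$), with $pl_k(0)=1$ and $pl_k(n)=0$ for $n<0$; equivalently $\sum_{n\ge0}pl_k(n)q^n=\prod_{n=1}^{\infty}(1-q^n)^{-\min(k,n)}$. *)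

theory Defs
  imports Main
begin

definition plane_partition :: "(nat \<times> nat \<Rightarrow> nat) \<Rightarrow> bool" where
  "plane_partition \<pi> \<longleftrightarrow>
     finite {p. \<pi> p \<noteq> 0} \<and>
     (\<forall>i j. \<pi> (i, Suc j) \<le> \<pi> (i, j)) \<and>
     (\<forall>i j. \<pi> (Suc i, j) \<le> \<pi> (i, j))"

definition pp_weight :: "(nat \<times> nat \<Rightarrow> nat) \<Rightarrow> nat" where
  "pp_weight \<pi> = (\<Sum>p\<in>{p. \<pi> p \<noteq> 0}. \<pi> p)"

text \<open>pl k n: number of k-component plane partitions of n, i.e. plane partitions of
  n all of whose entries are at most k. (pl k 0 = 1 via the empty partition.)\<close>

definition pl :: "nat \<Rightarrow> nat \<Rightarrow> nat" where
  "pl k n = card {\<pi>. plane_partition \<pi> \<and> pp_weight \<pi> = n \<and> (\<forall>p. \<pi> p \<le> k)}"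

end

(*
  MacMahon's formula, truncated: pl k n is the coefficient of q^n in the product of
  1/(1 - q^(i+j+1)) over i < k, j < n.  Conjugating the rows of a plane partition of n with
  entries at most k gives an n x k array decreasing along rows and columns.  Its diagonals form a
  sequence of partitions growing by horizontal strips up to the main diagonal and shrinking after
  it, and Fomin's growth-diagram local rule for RSK turns such sequences bijectively into
  arbitrary n x k matrices of naturals; the sizes of the partitions make entry (i, j) count with
  weight i + j + 1.

  Modulo p and below degree n + 1, the factors with exponent above n disappear, so the product
  becomes (q;q)_0 ... (q;q)_(p-1) / (q;q)_n^p, and Frobenius turns 1/(q;q)_n^p into
  1/(q^p;q^p)_n, a series in q^p.  So modulo p the generating function of pl p is an explicit
  polynomial times a series in q^p, and each congruence reduces to a finite check of the
  coefficients of a small multiple of that polynomial in one residue class modulo p.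
*)

theory Submission
  imports Defs "HOL-Computational_Algebra.Formal_Power_Series" "HOL-Computational_Algebra.Primes"
begin

section \<open>Interlacing partitions and Fomin's local rule\<close>

text \<open>Partitions are encoded by their weakly decreasing sequences of parts; interlace \<mu> \<kappa>
  says that \<kappa>/\<mu> is a horizontal strip.\<close>

definition interlace :: "(nat \<Rightarrow> nat) \<Rightarrow> (nat \<Rightarrow> nat) \<Rightarrow> bool" where
  "interlace \<mu> \<kappa> \<longleftrightarrow> (\<forall>i. \<kappa> (Suc i) \<le> \<mu> i \<and> \<mu> i \<le> \<kappa> i)"

lemma interlaceD:
  "interlace \<mu> \<kappa> \<Longrightarrow> \<kappa> (Suc i) \<le> \<mu> i" "interlace \<mu> \<kappa> \<Longrightarrow> \<mu> i \<le> \<kappa> i"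
  by (simp_all add: interlace_def)

text \<open>Fomin's local rule for RSK: for \<rho> interlacing \<mu> and \<nu> and a label m, fomin_up yields
  the \<kappa> interlaced by \<mu> and \<nu> from which fomin_down and fomin_label recover \<rho> and m, and
  |\<kappa>| + |\<rho>| = |\<mu>| + |\<nu>| + m.\<close>

definition fomin_up :: "(nat \<Rightarrow> nat) \<Rightarrow> (nat \<Rightarrow> nat) \<Rightarrow> (nat \<Rightarrow> nat) \<Rightarrow> nat \<Rightarrow> nat \<Rightarrow> nat" where
  "fomin_up \<rho> \<mu> \<nu> m i = (case i of
      0 \<Rightarrow> max (\<mu> 0) (\<nu> 0) + m
    | Suc j \<Rightarrow> max (\<mu> (Suc j)) (\<nu> (Suc j)) + min (\<mu> j) (\<nu> j) - \<rho> j)"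

definition fomin_down :: "(nat \<Rightarrow> nat) \<Rightarrow> (nat \<Rightarrow> nat) \<Rightarrow> (nat \<Rightarrow> nat) \<Rightarrow> nat \<Rightarrow> nat" where
  "fomin_down \<mu> \<nu> \<kappa> i = min (\<mu> i) (\<nu> i) + max (\<mu> (Suc i)) (\<nu> (Suc i)) - \<kappa> (Suc i)"

definition fomin_label :: "(nat \<Rightarrow> nat) \<Rightarrow> (nat \<Rightarrow> nat) \<Rightarrow> (nat \<Rightarrow> nat) \<Rightarrow> nat" where
  "fomin_label \<mu> \<nu> \<kappa> = \<kappa> 0 - max (\<mu> 0) (\<nu> 0)"

lemma fomin_up_0: "fomin_up \<rho> \<mu> \<nu> m 0 = max (\<mu> 0) (\<nu> 0) + m"
  by (simp add: fomin_up_def)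

lemma fomin_up_Suc:
  "fomin_up \<rho> \<mu> \<nu> m (Suc j) = max (\<mu> (Suc j)) (\<nu> (Suc j)) + min (\<mu> j) (\<nu> j) - \<rho> j"
  by (simp add: fomin_up_def)

lemma interlace_fomin_up:
  assumes "interlace \<rho> \<mu>" "interlace \<rho> \<nu>"
  shows "interlace \<mu> (fomin_up \<rho> \<mu> \<nu> m)" "interlace \<nu> (fomin_up \<rho> \<mu> \<nu> m)"
proof -
  have strips: "\<mu> (Suc i) \<le> \<rho> i" "\<rho> i \<le> \<mu> i" "\<nu> (Suc i) \<le> \<rho> i" "\<rho> i \<le> \<nu> i" for i
    using assms by (simp_all add: interlaceD)
  have "fomin_up \<rho> \<mu> \<nu> m (Suc i) \<le> \<mu> i \<and> fomin_up \<rho> \<mu> \<nu> m (Suc i) \<le> \<nu> i" for i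
    using strips[of i] by (auto simp: fomin_up_Suc)
  moreover have "\<mu> i \<le> fomin_up \<rho> \<mu> \<nu> m i \<and> \<nu> i \<le> fomin_up \<rho> \<mu> \<nu> m i" for i
    using strips[of "i - 1"] by (cases i) (auto simp: fomin_up_0 fomin_up_Suc)
  ultimately show "interlace \<mu> (fomin_up \<rho> \<mu> \<nu> m)" "interlace \<nu> (fomin_up \<rho> \<mu> \<nu> m)"
    by (simp_all add: interlace_def)
qed

lemma interlace_fomin_down:
  assumes "interlace \<mu> \<kappa>" "interlace \<nu> \<kappa>"
  shows "interlace (fomin_down \<mu> \<nu> \<kappa>) \<mu>" "interlace (fomin_down \<mu> \<nu> \<kappa>) \<nu>"
proof -
  have strips: "\<kappa> (Suc i) \<le> \<mu> i" "\<mu> i \<le> \<kappa> i" "\<kappa> (Suc i) \<le> \<nu> i" "\<nu> i \<le> \<kappa> i" for i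
    using assms by (simp_all add: interlaceD)
  have "\<mu> (Suc i) \<le> fomin_down \<mu> \<nu> \<kappa> i \<and> \<nu> (Suc i) \<le> fomin_down \<mu> \<nu> \<kappa> i \<and>
      fomin_down \<mu> \<nu> \<kappa> i \<le> \<mu> i \<and> fomin_down \<mu> \<nu> \<kappa> i \<le> \<nu> i" for i
    using strips[of "Suc i"] strips[of i] by (auto simp: fomin_down_def)
  then show "interlace (fomin_down \<mu> \<nu> \<kappa>) \<mu>" "interlace (fomin_down \<mu> \<nu> \<kappa>) \<nu>"
    by (simp_all add: interlace_def)
qed

lemma fomin_down_up:
  assumes "interlace \<rho> \<mu>" "interlace \<rho> \<nu>"
  shows "fomin_down \<mu> \<nu> (fomin_up \<rho> \<mu> \<nu> m) = \<rho>"
proof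
  fix i
  have "\<mu> (Suc i) \<le> \<rho> i" "\<rho> i \<le> \<mu> i" "\<nu> (Suc i) \<le> \<rho> i" "\<rho> i \<le> \<nu> i"
    using assms by (simp_all add: interlaceD)
  then show "fomin_down \<mu> \<nu> (fomin_up \<rho> \<mu> \<nu> m) i = \<rho> i"
    by (auto simp: fomin_down_def fomin_up_Suc)
qed

lemma fomin_label_up: "fomin_label \<mu> \<nu> (fomin_up \<rho> \<mu> \<nu> m) = m"
  by (simp add: fomin_label_def fomin_up_0)

lemma fomin_up_down:
  assumes "interlace \<mu> \<kappa>" "interlace \<nu> \<kappa>"
  shows "fomin_up (fomin_down \<mu> \<nu> \<kappa>) \<mu> \<nu> (fomin_label \<mu> \<nu> \<kappa>) = \<kappa>"
proof
  fix i
  have strips: "\<kappa> (Suc i) \<le> \<mu> i" "\<mu> i \<le> \<kappa> i" "\<kappa> (Suc i) \<le> \<nu> i" "\<nu> i \<le> \<kappa> i" for i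
    using assms by (simp_all add: interlaceD)
  show "fomin_up (fomin_down \<mu> \<nu> \<kappa>) \<mu> \<nu> (fomin_label \<mu> \<nu> \<kappa>) i = \<kappa> i"
    using strips[of i] strips[of "i - 1"]
    by (cases i) (auto simp: fomin_up_0 fomin_up_Suc fomin_down_def fomin_label_def)
qed

lemma sum_fomin_up:
  assumes "interlace \<rho> \<mu>" "interlace \<rho> \<nu>" "\<mu> B = 0" "\<nu> B = 0"
  shows "(\<Sum>i<Suc B. fomin_up \<rho> \<mu> \<nu> m i) + (\<Sum>i<B. \<rho> i) = (\<Sum>i<B. \<mu> i) + (\<Sum>i<B. \<nu> i) + m"
proof -
  have "(\<Sum>i<Suc b. fomin_up \<rho> \<mu> \<nu> m i) + (\<Sum>i<b. \<rho> i)
      = (\<Sum>i<Suc b. max (\<mu> i) (\<nu> i)) + (\<Sum>i<b. min (\<mu> i) (\<nu> i)) + m" for b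
  proof (induction b)
    case 0
    then show ?case by (simp add: fomin_up_0)
  next
    case (Suc b)
    have "\<rho> b \<le> \<mu> b" "\<rho> b \<le> \<nu> b"
      using assms by (simp_all add: interlaceD)
    with Suc show ?case by (simp add: fomin_up_Suc)
  qed
  moreover have "(\<Sum>i<B. max (\<mu> i) (\<nu> i)) + (\<Sum>i<B. min (\<mu> i) (\<nu> i)) = (\<Sum>i<B. \<mu> i) + (\<Sum>i<B. \<nu> i)"
    unfolding sum.distrib[symmetric] by (rule sum.cong) auto
  ultimately show ?thesis
    using assms(3,4) by simp
qed

section \<open>Growth diagrams\<close>

definition strip_chain :: "nat \<Rightarrow> (nat \<Rightarrow> nat \<Rightarrow> nat) \<Rightarrow> bool" where
  "strip_chain W s \<longleftrightarrow> s 0 = (\<lambda>_. 0) \<and> (\<forall>t<W. interlace (s t) (s (Suc t)))"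

lemma interlace_zero_Suc: "interlace \<mu> \<kappa> \<Longrightarrow> \<mu> i = 0 \<Longrightarrow> \<kappa> (Suc i) = 0"
  using interlaceD(1)[of \<mu> \<kappa> i] by simp

lemma strip_chain_zero:
  assumes "strip_chain W s" "t \<le> W" "t \<le> x"
  shows "s t x = 0"
  using assms(2,3)
proof (induction t arbitrary: x)
  case 0
  then show ?case using assms(1) by (simp add: strip_chain_def)
next
  case (Suc t)
  then obtain y where "x = Suc y" "t \<le> y" by (cases x) auto
  moreover have "interlace (s t) (s (Suc t))"
    using assms(1) Suc.prems by (simp add: strip_chain_def)
  ultimately show ?case using Suc interlace_zero_Suc by simp
qed

lemma strip_chain_mono:
  assumes "strip_chain W s" "t \<le> t'" "t' \<le> W"
  shows "s t x \<le> s t' x"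
  using assms(2,3)
proof (induction t' rule: dec_induct)
  case (step t')
  then have "s t' x \<le> s (Suc t') x"
    using assms(1) interlaceD(2) by (simp add: strip_chain_def)
  with step show ?case by simp
qed simp

lemma sum_strip_chain:
  assumes "strip_chain W s" "t \<le> W" "t \<le> B"
  shows "(\<Sum>x<B. s t x) = (\<Sum>x<t. s t x)"
  by (rule sum.mono_neutral_right) (use assms strip_chain_zero in auto)

text \<open>One row of the growth diagram: the chain \<tau> below and the labels r of the row determine
  the chain above; shrink_row inverts it, starting from the top end a = \<tau> W.\<close>

primrec grow_row :: "(nat \<Rightarrow> nat \<Rightarrow> nat) \<Rightarrow> (nat \<Rightarrow> nat) \<Rightarrow> nat \<Rightarrow> nat \<Rightarrow> nat" where
  "grow_row \<tau> r 0 = (\<lambda>_. 0)"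
| "grow_row \<tau> r (Suc j) = fomin_up (\<tau> j) (\<tau> (Suc j)) (grow_row \<tau> r j) (r j)"

function shrink_row :: "nat \<Rightarrow> (nat \<Rightarrow> nat \<Rightarrow> nat) \<Rightarrow> (nat \<Rightarrow> nat) \<Rightarrow> nat \<Rightarrow> nat \<Rightarrow> nat" where
  "shrink_row W \<sigma> a j =
     (if W \<le> j then a else fomin_down (shrink_row W \<sigma> a (Suc j)) (\<sigma> j) (\<sigma> (Suc j)))"
  by auto
termination by (relation "measure (\<lambda>(W, \<sigma>, a, j). W - j)") auto

declare shrink_row.simps [simp del]

lemma shrink_row_top: "W \<le> j \<Longrightarrow> shrink_row W \<sigma> a j = a"
  by (subst shrink_row.simps) simp

lemma shrink_row_step:
  "j < W \<Longrightarrow> shrink_row W \<sigma> a j = fomin_down (shrink_row W \<sigma> a (Suc j)) (\<sigma> j) (\<sigma> (Suc j))"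
  by (subst shrink_row.simps) simp

lemma shrink_row_cong:
  "(\<And>t. t \<le> W \<Longrightarrow> \<sigma> t = \<sigma>' t) \<Longrightarrow> shrink_row W \<sigma> a j = shrink_row W \<sigma>' a j"
proof (induction W \<sigma> a j rule: shrink_row.induct)
  case (1 W \<sigma> a j)
  then show ?case
    by (cases "W \<le> j") (simp_all add: shrink_row_top shrink_row_step)
qed

definition row_labels :: "(nat \<Rightarrow> nat \<Rightarrow> nat) \<Rightarrow> (nat \<Rightarrow> nat \<Rightarrow> nat) \<Rightarrow> nat \<Rightarrow> nat" where
  "row_labels \<tau> \<sigma> j = fomin_label (\<tau> (Suc j)) (\<sigma> j) (\<sigma> (Suc j))"

lemma row_labels_grow_row: "row_labels \<tau> (grow_row \<tau> r) j = r j"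
  by (simp add: row_labels_def fomin_label_up)

context
  fixes W :: nat and \<tau> :: "nat \<Rightarrow> nat \<Rightarrow> nat" and r :: "nat \<Rightarrow> nat"
  assumes chain: "strip_chain W \<tau>"
begin

lemma interlace_grow_row: "j \<le> W \<Longrightarrow> interlace (\<tau> j) (grow_row \<tau> r j)"
proof (induction j)
  case 0
  then show ?case using chain by (simp add: strip_chain_def interlace_def)
next
  case (Suc j)
  then show ?case
    using chain interlace_fomin_up(1) by (simp add: strip_chain_def)
qed

lemma strip_chain_grow_row: "strip_chain W (grow_row \<tau> r)"
  using chain interlace_grow_row interlace_fomin_up(2) by (simp add: strip_chain_def)

lemma shrink_grow_row: "j \<le> W \<Longrightarrow> shrink_row W (grow_row \<tau> r) (\<tau> W) j = \<tau> j"
proof (induction j rule: inc_induct)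
  case base
  then show ?case by (simp add: shrink_row_top)
next
  case (step j)
  have "interlace (\<tau> j) (\<tau> (Suc j))"
    using chain step.hyps by (simp add: strip_chain_def)
  with step show ?case
    by (simp add: shrink_row_step fomin_down_up interlace_grow_row)
qed

lemma sum_grow_row: "j \<le> W \<Longrightarrow> (\<Sum>x<W. grow_row \<tau> r j x) = (\<Sum>x<W. \<tau> j x) + (\<Sum>l<j. r l)"
proof (induction j)
  case 0
  then show ?case using chain by (simp add: strip_chain_def)
next
  case (Suc j)
  let ?\<sigma> = "grow_row \<tau> r"
  have jW: "j < W" using Suc.prems by simp
  have chain\<sigma>: "strip_chain W ?\<sigma>" by (rule strip_chain_grow_row)
  have "(\<Sum>x<Suc (Suc j). ?\<sigma> (Suc j) x) + (\<Sum>x<Suc j. \<tau> j x)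
      = (\<Sum>x<Suc j. \<tau> (Suc j) x) + (\<Sum>x<Suc j. ?\<sigma> j x) + r j"
    unfolding grow_row.simps(2)
  proof (rule sum_fomin_up)
    show "interlace (\<tau> j) (\<tau> (Suc j))" using chain jW by (simp add: strip_chain_def)
    show "interlace (\<tau> j) (?\<sigma> j)" using jW by (simp add: interlace_grow_row)
    show "\<tau> (Suc j) (Suc j) = 0" using chain jW by (simp add: strip_chain_zero)
    show "?\<sigma> j (Suc j) = 0" using chain\<sigma> jW by (simp add: strip_chain_zero)
  qed
  moreover have "(\<Sum>x<Suc (Suc j). ?\<sigma> (Suc j) x) = (\<Sum>x<W. ?\<sigma> (Suc j) x)"
    using sum_strip_chain[OF chain\<sigma>, of "Suc j" "Suc (Suc j)"]
      sum_strip_chain[OF chain\<sigma>, of "Suc j" W] jW by simp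
  moreover have "(\<Sum>x<Suc j. ?\<sigma> j x) = (\<Sum>x<W. ?\<sigma> j x)"
    using sum_strip_chain[OF chain\<sigma>, of j "Suc j"] sum_strip_chain[OF chain\<sigma>, of j W] jW
    by simp
  moreover have "(\<Sum>x<Suc j. \<tau> (Suc j) x) = (\<Sum>x<W. \<tau> (Suc j) x)"
    using sum_strip_chain[OF chain, of "Suc j" W] jW by simp
  moreover have "(\<Sum>x<Suc j. \<tau> j x) = (\<Sum>x<W. \<tau> j x)"
    using sum_strip_chain[OF chain, of j "Suc j"] sum_strip_chain[OF chain, of j W] jW by simp
  ultimately show ?case
    using Suc.IH jW sum.lessThan_Suc[of r j] by linarith
qed

end

context
  fixes W :: nat and \<sigma> :: "nat \<Rightarrow> nat \<Rightarrow> nat" and a :: "nat \<Rightarrow> nat"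
  assumes chain: "strip_chain W \<sigma>" and top: "interlace a (\<sigma> W)"
begin

lemma interlace_shrink_row: "j \<le> W \<Longrightarrow> interlace (shrink_row W \<sigma> a j) (\<sigma> j)"
proof (induction j rule: inc_induct)
  case base
  then show ?case using top by (simp add: shrink_row_top)
next
  case (step j)
  then show ?case
    using chain interlace_fomin_down(2) by (simp add: shrink_row_step strip_chain_def)
qed

lemma strip_chain_shrink_row: "strip_chain W (shrink_row W \<sigma> a)"
proof -
  have "shrink_row W \<sigma> a 0 x = 0" for x
    using interlaceD(2)[OF interlace_shrink_row[of 0], of x] chain by (simp add: strip_chain_def)
  moreover have "interlace (shrink_row W \<sigma> a t) (shrink_row W \<sigma> a (Suc t))" if "t < W" for t
    using that chain interlace_fomin_down(1) interlace_shrink_row[of "Suc t"]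
    by (simp add: shrink_row_step strip_chain_def)
  ultimately show ?thesis by (auto simp: strip_chain_def)
qed

lemma grow_shrink_row:
  "j \<le> W \<Longrightarrow> grow_row (shrink_row W \<sigma> a) (row_labels (shrink_row W \<sigma> a) \<sigma>) j = \<sigma> j"
proof (induction j)
  case 0
  then show ?case using chain by (simp add: strip_chain_def)
next
  case (Suc j)
  then show ?case
    using chain interlace_shrink_row[of "Suc j"] fomin_up_down
    by (simp add: shrink_row_step row_labels_def strip_chain_def)
qed

end

definition updown :: "nat \<Rightarrow> nat \<Rightarrow> (nat \<Rightarrow> nat \<Rightarrow> nat) set" where
  "updown W k = {s. strip_chain W s \<and> (\<forall>t. W \<le> t \<longrightarrow> t < W + k \<longrightarrow> interlace (s (Suc t)) (s t))
     \<and> (\<forall>t. W + k \<le> t \<longrightarrow> s t = (\<lambda>_. 0))}"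

definition updown_weight :: "nat \<Rightarrow> nat \<Rightarrow> (nat \<Rightarrow> nat \<Rightarrow> nat) \<Rightarrow> nat" where
  "updown_weight W k s = (\<Sum>t\<le>W + k. \<Sum>x<W. s t x)"

definition matrix_weight :: "nat \<Rightarrow> nat \<Rightarrow> (nat \<times> nat \<Rightarrow> nat) \<Rightarrow> nat" where
  "matrix_weight W k m = (\<Sum>i<k. \<Sum>j<W. m (i, j) * (W - j + (k - 1 - i)))"

definition stack_row :: "nat \<Rightarrow> (nat \<Rightarrow> nat \<Rightarrow> nat) \<Rightarrow> (nat \<Rightarrow> nat \<Rightarrow> nat) \<Rightarrow> nat \<Rightarrow> nat \<Rightarrow> nat" where
  "stack_row W s \<sigma> t = (if t \<le> W then \<sigma> t else s (t - 1))"

definition unstack_row :: "nat \<Rightarrow> (nat \<Rightarrow> nat \<Rightarrow> nat) \<Rightarrow> nat \<Rightarrow> nat \<Rightarrow> nat" where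
  "unstack_row W s t = (if t \<le> W then shrink_row W s (s (Suc W)) t else s (Suc t))"

text \<open>Row k of the matrix is grown on top of the chain built from the earlier rows, whose part
  beyond W is shifted one step to the right.\<close>

primrec updown_of_matrix :: "nat \<Rightarrow> nat \<Rightarrow> (nat \<times> nat \<Rightarrow> nat) \<Rightarrow> nat \<Rightarrow> nat \<Rightarrow> nat" where
  "updown_of_matrix W 0 m = (\<lambda>_ _. 0)"
| "updown_of_matrix W (Suc k) m =
     (let s = updown_of_matrix W k m in stack_row W s (grow_row s (\<lambda>j. m (k, j))))"

primrec matrix_of_updown :: "nat \<Rightarrow> nat \<Rightarrow> (nat \<Rightarrow> nat \<Rightarrow> nat) \<Rightarrow> nat \<times> nat \<Rightarrow> nat" where
  "matrix_of_updown W 0 s = (\<lambda>_. 0)"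
| "matrix_of_updown W (Suc k) s =
     (let s' = unstack_row W s in
      (\<lambda>(i, j). if i < k then matrix_of_updown W k s' (i, j)
                else if i = k \<and> j < W then row_labels s' s j else 0))"

lemma updownD:
  assumes "s \<in> updown W k"
  shows "strip_chain W s" "W \<le> t \<Longrightarrow> t < W + k \<Longrightarrow> interlace (s (Suc t)) (s t)"
    "W + k \<le> t \<Longrightarrow> s t = (\<lambda>_. 0)"
  using assms by (simp_all add: updown_def)

lemma grow_row_cong:
  "(\<And>t. t \<le> j \<Longrightarrow> \<tau> t = \<tau>' t) \<Longrightarrow> (\<And>l. l < j \<Longrightarrow> r l = r' l) \<Longrightarrow> grow_row \<tau> r j = grow_row \<tau>' r' j"
  by (induction j) auto

lemma stack_row_in_updown:
  assumes "s \<in> updown W k"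
  shows "stack_row W s (grow_row s r) \<in> updown W (Suc k)"
proof -
  note s = updownD[OF assms]
  have "strip_chain W (stack_row W s (grow_row s r))"
    using strip_chain_grow_row[OF s(1)] by (simp add: strip_chain_def stack_row_def)
  moreover have "interlace (stack_row W s (grow_row s r) (Suc t)) (stack_row W s (grow_row s r) t)"
    if "W \<le> t" "t < W + Suc k" for t
  proof (cases "t = W")
    case True
    then show ?thesis using interlace_grow_row[OF s(1)] by (simp add: stack_row_def)
  next
    case False
    then show ?thesis using s(2)[of "t - 1"] that by (simp add: stack_row_def Suc_diff_Suc)
  qed
  moreover have "stack_row W s (grow_row s r) t = (\<lambda>_. 0)" if "W + Suc k \<le> t" for t
    using s(3)[of "t - 1"] that by (simp add: stack_row_def)
  ultimately show ?thesis by (simp add: updown_def)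
qed

lemma unstack_stack_row:
  assumes "s \<in> updown W k"
  shows "unstack_row W (stack_row W s (grow_row s r)) = s"
proof
  fix t
  have "shrink_row W (stack_row W s (grow_row s r)) (s W) t = shrink_row W (grow_row s r) (s W) t"
    by (rule shrink_row_cong) (simp add: stack_row_def)
  then show "unstack_row W (stack_row W s (grow_row s r)) t = s t"
    using shrink_grow_row[OF updownD(1)[OF assms]]
    by (simp add: unstack_row_def stack_row_def)
qed

lemma unstack_row_in_updown:
  assumes "s \<in> updown W (Suc k)"
  shows "unstack_row W s \<in> updown W k"
proof -
  note s = updownD[OF assms]
  have top: "interlace (s (Suc W)) (s W)" using s(2)[of W] by simp
  have "strip_chain W (unstack_row W s)"
    using strip_chain_shrink_row[OF s(1) top] by (simp add: strip_chain_def unstack_row_def)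
  moreover have "interlace (unstack_row W s (Suc t)) (unstack_row W s t)"
    if "W \<le> t" "t < W + k" for t
    using that s(2)[of "Suc t"] by (cases "t = W") (simp_all add: unstack_row_def shrink_row_top)
  moreover have "unstack_row W s t = (\<lambda>_. 0)" if "W + k \<le> t" for t
    using that s(3)[of "Suc t"] s(3)[of "Suc W"]
    by (cases "t = W") (simp_all add: unstack_row_def shrink_row_top)
  ultimately show ?thesis by (simp add: updown_def)
qed

lemma stack_unstack_row:
  assumes "s \<in> updown W (Suc k)"
  defines "s' \<equiv> unstack_row W s"
  shows "stack_row W s' (grow_row s' (row_labels s' s)) = s"
proof
  fix t
  note s = updownD[OF assms(1)]
  let ?\<tau> = "shrink_row W s (s (Suc W))"
  have top: "interlace (s (Suc W)) (s W)" using s(2)[of W] by simp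
  show "stack_row W s' (grow_row s' (row_labels s' s)) t = s t"
  proof (cases "t \<le> W")
    case True
    have "grow_row s' (row_labels s' s) t = grow_row ?\<tau> (row_labels ?\<tau> s) t"
      by (rule grow_row_cong) (use True in \<open>auto simp: s'_def unstack_row_def row_labels_def\<close>)
    then show ?thesis
      using True grow_shrink_row[OF s(1) top] by (simp add: stack_row_def)
  next
    case False
    then show ?thesis
      by (cases "t = Suc W") (auto simp: stack_row_def s'_def unstack_row_def shrink_row_top)
  qed
qed

lemma sum_triangle: "(\<Sum>t\<le>N. \<Sum>l<t. r l) = (\<Sum>l<N. r l * (N - l :: nat))"
proof (induction N)
  case (Suc N)
  have "(\<Sum>l<Suc N. r l * (Suc N - l)) = (\<Sum>l<Suc N. r l * (N - l) + r l)"
    by (rule sum.cong) (auto simp: Suc_diff_le)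
  with Suc show ?case by (simp add: sum.distrib)
qed simp

lemma updown_weight_stack_row:
  assumes "s \<in> updown W k"
  shows "updown_weight W (Suc k) (stack_row W s (grow_row s r))
    = updown_weight W k s + (\<Sum>x<W. s W x) + (\<Sum>l<W. r l * (W - l))"
proof -
  let ?s' = "stack_row W s (grow_row s r)"
  let ?row = "\<lambda>s t. \<Sum>x<W. s t x"
  have split: "{..W + j} = {..W} \<union> {W<..W + j}" for j by auto
  have shift: "{W<..W + Suc k} = Suc ` {W..W + k}"
    by (auto simp: image_iff intro!: bexI[of _ "_ - 1"])
  have "updown_weight W (Suc k) ?s' = (\<Sum>t\<le>W. ?row ?s' t) + (\<Sum>t\<in>{W<..W + Suc k}. ?row ?s' t)"
    unfolding updown_weight_def split by (rule sum.union_disjoint) auto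
  also have "(\<Sum>t\<le>W. ?row ?s' t) = (\<Sum>t\<le>W. ?row s t + (\<Sum>l<t. r l))"
    using sum_grow_row[OF updownD(1)[OF assms]] by (auto simp: stack_row_def intro!: sum.cong)
  also have "\<dots> = (\<Sum>t\<le>W. ?row s t) + (\<Sum>l<W. r l * (W - l))"
    by (simp add: sum.distrib sum_triangle)
  also have "(\<Sum>t\<in>{W<..W + Suc k}. ?row ?s' t) = (\<Sum>t\<in>{W..W + k}. ?row s t)"
    unfolding shift by (subst sum.reindex) (auto simp: stack_row_def)
  also have "\<dots> = ?row s W + (\<Sum>t\<in>{W<..W + k}. ?row s t)"
    by (subst sum.head) auto
  finally show ?thesis
    unfolding updown_weight_def split by (subst sum.union_disjoint) auto
qed

lemma row_labels_stack_row: "j < W \<Longrightarrow> row_labels s (stack_row W s \<sigma>) j = row_labels s \<sigma> j"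
  by (simp add: row_labels_def stack_row_def)

lemma updown_of_matrix_in_updown: "updown_of_matrix W k m \<in> updown W k"
proof (induction k)
  case 0
  then show ?case by (simp add: updown_def strip_chain_def interlace_def)
next
  case (Suc k)
  then show ?case by (simp add: Let_def stack_row_in_updown)
qed

lemma updown_of_matrix_cong:
  "(\<And>i j. i < k \<Longrightarrow> m (i, j) = m' (i, j)) \<Longrightarrow> updown_of_matrix W k m = updown_of_matrix W k m'"
  by (induction k) (simp_all add: Let_def)

lemma matrix_of_updown_of_matrix:
  "matrix_of_updown W k (updown_of_matrix W k m) (i, j) = (if i < k \<and> j < W then m (i, j) else 0)"
proof (induction k arbitrary: i j)
  case (Suc k)
  let ?s = "updown_of_matrix W k m"
  have "unstack_row W (stack_row W ?s (grow_row ?s (\<lambda>j. m (k, j)))) = ?s"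
    by (rule unstack_stack_row[OF updown_of_matrix_in_updown])
  with Suc show ?case
    by (auto simp: Let_def row_labels_stack_row row_labels_grow_row)
qed simp

lemma sum_updown_of_matrix_top: "(\<Sum>x<W. updown_of_matrix W k m W x) = (\<Sum>i<k. \<Sum>j<W. m (i, j))"
proof (induction k)
  case (Suc k)
  have "strip_chain W (updown_of_matrix W k m)"
    using updown_of_matrix_in_updown updownD(1) by blast
  with Suc show ?case by (simp add: Let_def stack_row_def sum_grow_row)
qed simp

lemma matrix_weight_Suc:
  "matrix_weight W (Suc k) m
     = matrix_weight W k m + (\<Sum>i<k. \<Sum>j<W. m (i, j)) + (\<Sum>j<W. m (k, j) * (W - j))"
proof -
  have "(\<Sum>i<k. \<Sum>j<W. m (i, j) * (W - j + (k - i)))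
      = (\<Sum>i<k. \<Sum>j<W. m (i, j) * (W - j + (k - 1 - i)) + m (i, j))"
  proof (intro sum.cong refl)
    fix i j assume "i \<in> {..<k}"
    then have "W - j + (k - i) = W - j + (k - 1 - i) + 1" by auto
    then show "m (i, j) * (W - j + (k - i)) = m (i, j) * (W - j + (k - 1 - i)) + m (i, j)"
      by simp
  qed
  then show ?thesis
    by (simp add: matrix_weight_def sum.distrib)
qed

lemma updown_weight_updown_of_matrix:
  "updown_weight W k (updown_of_matrix W k m) = matrix_weight W k m"
proof (induction k)
  case 0
  then show ?case by (simp add: updown_weight_def matrix_weight_def)
next
  case (Suc k)
  then show ?case
    by (simp add: Let_def updown_weight_stack_row updown_of_matrix_in_updown
        sum_updown_of_matrix_top matrix_weight_Suc)
qed

definition box_matrices :: "nat \<Rightarrow> nat \<Rightarrow> (nat \<times> nat \<Rightarrow> nat) set" where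
  "box_matrices W k = {m. \<forall>i j. k \<le> i \<or> W \<le> j \<longrightarrow> m (i, j) = 0}"

lemma matrix_of_updown_of_matrix_box:
  "m \<in> box_matrices W k \<Longrightarrow> matrix_of_updown W k (updown_of_matrix W k m) = m"
  by (auto simp: box_matrices_def matrix_of_updown_of_matrix not_less)

lemma updown_zero_is_zero:
  assumes "s \<in> updown W 0"
  shows "s = (\<lambda>_ _. 0)"
proof (intro ext)
  fix t x
  note s = updownD[OF assms]
  show "s t x = 0"
  proof (cases "t \<le> W")
    case True
    then show ?thesis using strip_chain_mono[OF s(1) True order_refl, of x] s(3)[of W] by simp
  next
    case False
    then show ?thesis using s(3)[of t] by simp
  qed
qed

lemma matrix_of_updown:
  "s \<in> updown W k \<Longrightarrow>
     matrix_of_updown W k s \<in> box_matrices W k \<and> updown_of_matrix W k (matrix_of_updown W k s) = s"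
proof (induction k arbitrary: s)
  case 0
  then have "s = (\<lambda>_ _. 0)" by (rule updown_zero_is_zero)
  then show ?case by (simp add: box_matrices_def)
next
  case (Suc k)
  define s' where "s' = unstack_row W s"
  define m where "m = matrix_of_updown W (Suc k) s"
  have IH: "matrix_of_updown W k s' \<in> box_matrices W k"
    "updown_of_matrix W k (matrix_of_updown W k s') = s'"
    using Suc.IH unstack_row_in_updown[OF Suc.prems] by (simp_all add: s'_def)
  have m_lower: "updown_of_matrix W k m = s'"
    using IH(2) updown_of_matrix_cong[of k m "matrix_of_updown W k s'"]
    by (simp add: m_def Let_def s'_def)
  have "stack_row W s' (grow_row s' (\<lambda>j. m (k, j))) = stack_row W s' (grow_row s' (row_labels s' s))"
    unfolding stack_row_def
    by (intro ext if_cong refl grow_row_cong) (auto simp: m_def Let_def s'_def)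
  then have "updown_of_matrix W (Suc k) m = s"
    using stack_unstack_row[OF Suc.prems] by (simp add: Let_def m_lower s'_def)
  moreover have "m \<in> box_matrices W (Suc k)"
    using IH(1) by (auto simp: m_def Let_def box_matrices_def s'_def)
  ultimately show ?case by (simp add: m_def)
qed

theorem card_box_matrices_updown:
  "card {m \<in> box_matrices W k. matrix_weight W k m = n} = card {s \<in> updown W k. updown_weight W k s = n}"
proof (rule bij_betw_same_card[of "updown_of_matrix W k"],
    rule bij_betw_byWitness[of _ "matrix_of_updown W k"])
  show "\<forall>m\<in>{m \<in> box_matrices W k. matrix_weight W k m = n}.
      matrix_of_updown W k (updown_of_matrix W k m) = m"
    by (simp add: matrix_of_updown_of_matrix_box)
  show "\<forall>s\<in>{s \<in> updown W k. updown_weight W k s = n}. updown_of_matrix W k (matrix_of_updown W k s) = s"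
    by (simp add: matrix_of_updown)
  show "updown_of_matrix W k ` {m \<in> box_matrices W k. matrix_weight W k m = n}
      \<subseteq> {s \<in> updown W k. updown_weight W k s = n}"
    by (auto simp: updown_of_matrix_in_updown updown_weight_updown_of_matrix)
  show "matrix_of_updown W k ` {s \<in> updown W k. updown_weight W k s = n}
      \<subseteq> {m \<in> box_matrices W k. matrix_weight W k m = n}"
  proof clarify
    fix s assume "s \<in> updown W k" "n = updown_weight W k s"
    then show "matrix_of_updown W k s \<in> box_matrices W k
        \<and> matrix_weight W k (matrix_of_updown W k s) = updown_weight W k s"
      using matrix_of_updown[of s] updown_weight_updown_of_matrix[of W k "matrix_of_updown W k s"]
      by auto
  qed
qed

section \<open>Box arrays and their diagonals\<close>

definition box_arrays :: "nat \<Rightarrow> nat \<Rightarrow> (nat \<Rightarrow> nat \<Rightarrow> nat) set" where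
  "box_arrays W k = {A. (\<forall>x y. A (Suc x) y \<le> A x y) \<and> (\<forall>x y. A x (Suc y) \<le> A x y) \<and>
     (\<forall>x y. (W \<le> x \<or> k \<le> y) \<longrightarrow> A x y = 0)}"

definition array_weight :: "nat \<Rightarrow> nat \<Rightarrow> (nat \<Rightarrow> nat \<Rightarrow> nat) \<Rightarrow> nat" where
  "array_weight W k A = (\<Sum>x<W. \<Sum>y<k. A x y)"

definition diagonals :: "nat \<Rightarrow> (nat \<Rightarrow> nat \<Rightarrow> nat) \<Rightarrow> nat \<Rightarrow> nat \<Rightarrow> nat" where
  "diagonals W A = (\<lambda>t x. if t \<le> W then A (x + (W - t)) x else A x (x + (t - W)))"

definition array_of_diagonals :: "nat \<Rightarrow> nat \<Rightarrow> (nat \<Rightarrow> nat \<Rightarrow> nat) \<Rightarrow> nat \<Rightarrow> nat \<Rightarrow> nat" where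
  "array_of_diagonals W k s = (\<lambda>x y. if x < W \<and> y < k then (if y \<le> x then s (W - (x - y)) y else s (W + (y - x)) x) else 0)"

definition diagonal_index :: "nat \<Rightarrow> nat \<times> nat \<Rightarrow> nat \<times> nat" where
  "diagonal_index W = (\<lambda>(x, y). if y \<le> x then (W - (x - y), y) else (W + (y - x), x))"

definition array_index :: "nat \<Rightarrow> nat \<times> nat \<Rightarrow> nat \<times> nat" where
  "array_index W = (\<lambda>(t, x). if t \<le> W then (x + (W - t), x) else (x, x + (t - W)))"

lemma diagonals_eq_array_index: "diagonals W A t x = case_prod A (array_index W (t, x))"
  by (simp add: diagonals_def array_index_def)

lemma diagonal_index_array_index: "diagonal_index W (array_index W q) = q"
  by (auto simp: diagonal_index_def array_index_def split: prod.splits)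

lemma array_of_diagonals_eq_diagonal_index:
  "array_of_diagonals W k s x y = (if x < W \<and> y < k then case_prod s (diagonal_index W (x, y)) else 0)"
  by (simp add: array_of_diagonals_def diagonal_index_def)

lemma updown_zero_right:
  assumes "s \<in> updown W k" "W \<le> t" "W + k \<le> x + t"
  shows "s t x = 0"
  using assms(2,3)
proof (induction "W + k - t" arbitrary: t x)
  case 0
  then show ?case using updownD(3)[OF assms(1)] by simp
next
  case (Suc d)
  then obtain i where x: "x = Suc i" by (cases x) auto
  have "s t (Suc i) \<le> s (Suc t) i"
    using updownD(2)[OF assms(1)] Suc.hyps(2) Suc.prems by (simp add: interlaceD)
  moreover have "s (Suc t) i = 0"
    using Suc.hyps Suc.prems x by simp
  ultimately show ?case using x by simp
qed

lemma updown_le_top: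
  assumes "s \<in> updown W k" "W \<le> t"
  shows "s t x \<le> s W x"
  using assms(2)
proof (induction t rule: dec_induct)
  case (step t)
  have "s (Suc t) x \<le> s t x"
    using updownD[OF assms(1)] step.hyps by (cases "t < W + k") (simp_all add: interlaceD)
  with step.IH show ?case by simp
qed simp

lemma updown_zero:
  assumes "s \<in> updown W k"
    and "t \<le> W \<and> (t \<le> x \<or> k \<le> x) \<or> W \<le> t \<and> (W \<le> x \<or> W + k \<le> x + t)"
  shows "s t x = 0"
proof -
  note chain = updownD(1)[OF assms(1)]
  show ?thesis
  proof (cases "t \<le> W")
    case True
    then show ?thesis
      using assms(2) strip_chain_zero[OF chain] strip_chain_mono[OF chain True order_refl, of x]
        updown_zero_right[OF assms(1), of W x] by auto
  next
    case False
    then show ?thesis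
      using assms(2) updown_zero_right[OF assms(1), of t x] updown_le_top[OF assms(1), of t x]
        strip_chain_zero[OF chain, of W x] by auto
  qed
qed

lemma box_arraysD:
  assumes "A \<in> box_arrays W k"
  shows "A (Suc x) y \<le> A x y" "A x (Suc y) \<le> A x y" "W \<le> x \<or> k \<le> y \<Longrightarrow> A x y = 0"
  using assms by (auto simp: box_arrays_def)

lemma strip_chain_diagonals:
  assumes "A \<in> box_arrays W k"
  shows "strip_chain W (diagonals W A)"
  unfolding strip_chain_def
proof (intro conjI allI impI)
  show "diagonals W A 0 = (\<lambda>_. 0)"
    using box_arraysD(3)[OF assms] by (auto simp: diagonals_def)
  fix t assume t: "t < W"
  then obtain e where e: "W - t = Suc e" "W - Suc t = e"
    by (metis Suc_diff_Suc diff_Suc_1)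
  have "A (Suc (i + e)) (Suc i) \<le> A (Suc (i + e)) i" "A (Suc (i + e)) i \<le> A (i + e) i" for i
    using box_arraysD(1,2)[OF assms] by blast+
  then show "interlace (diagonals W A t) (diagonals W A (Suc t))"
    using t e by (simp add: interlace_def diagonals_def)
qed

lemma interlace_diagonals_Suc:
  assumes "A \<in> box_arrays W k" "W \<le> t"
  shows "interlace (diagonals W A (Suc t)) (diagonals W A t)"
proof -
  define d where "d = t - W"
  have "diagonals W A t = (\<lambda>x. A x (x + d))" "diagonals W A (Suc t) = (\<lambda>x. A x (Suc (x + d)))"
    using assms(2) by (auto simp: diagonals_def d_def Suc_diff_le)
  moreover have "A (Suc i) (Suc (i + d)) \<le> A i (Suc (i + d))" "A i (Suc (i + d)) \<le> A i (i + d)" for i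
    using box_arraysD(1,2)[OF assms(1)] by blast+
  ultimately show ?thesis by (simp add: interlace_def)
qed

lemma diagonals_in_updown:
  assumes "A \<in> box_arrays W k"
  shows "diagonals W A \<in> updown W k"
proof -
  have "diagonals W A t x = 0" if "W + k \<le> t" for t x
  proof (cases "t \<le> W")
    case True
    then show ?thesis using that box_arraysD(3)[OF assms, of "x + (W - t)" x] by (simp add: diagonals_def)
  next
    case False
    have "k \<le> x + (t - W)" using that by simp
    with False show ?thesis using box_arraysD(3)[OF assms] by (simp add: diagonals_def)
  qed
  then show ?thesis
    using strip_chain_diagonals[OF assms] interlace_diagonals_Suc[OF assms]
    by (auto simp: updown_def)
qed

lemma array_of_diagonals_Suc_row:
  assumes "s \<in> updown W k"
  shows "array_of_diagonals W k s (Suc x) y \<le> array_of_diagonals W k s x y"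
proof (cases "Suc x < W \<and> y < k")
  case True
  have up: "t < W \<Longrightarrow> interlace (s t) (s (Suc t))" for t
    using updownD(1)[OF assms] by (simp add: strip_chain_def)
  note down = updownD(2)[OF assms]
  consider "y \<le> x" | "y = Suc x" | "Suc x < y" by linarith
  then show ?thesis
  proof cases
    case 1
    define t where "t = W - (Suc x - y)"
    have "t < W" "W - (x - y) = Suc t" using True 1 by (auto simp: t_def)
    then show ?thesis
      using True 1 up interlaceD(2) by (simp add: array_of_diagonals_def flip: t_def)
  next
    case 2
    then show ?thesis
      using True down[of W] interlaceD(1) by (simp add: array_of_diagonals_def)
  next
    case 3
    define t where "t = W + (y - Suc x)"
    have "W \<le> t" "t < W + k" "W + (y - x) = Suc t" using True 3 by (auto simp: t_def)
    then show ?thesis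
      using True 3 down interlaceD(1) by (simp add: array_of_diagonals_def flip: t_def)
  qed
qed (auto simp: array_of_diagonals_def)

lemma array_of_diagonals_Suc_col:
  assumes "s \<in> updown W k"
  shows "array_of_diagonals W k s x (Suc y) \<le> array_of_diagonals W k s x y"
proof (cases "x < W \<and> Suc y < k")
  case True
  have up: "t < W \<Longrightarrow> interlace (s t) (s (Suc t))" for t
    using updownD(1)[OF assms] by (simp add: strip_chain_def)
  note down = updownD(2)[OF assms]
  consider "Suc y \<le> x" | "y = x" | "x < y" by linarith
  then show ?thesis
  proof cases
    case 1
    define t where "t = W - (x - y)"
    have "t < W" "W - (x - Suc y) = Suc t" using True 1 by (auto simp: t_def)
    then show ?thesis
      using True 1 up interlaceD(1) by (simp add: array_of_diagonals_def flip: t_def)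
  next
    case 2
    then show ?thesis
      using True down[of W] interlaceD(2) by (simp add: array_of_diagonals_def)
  next
    case 3
    define t where "t = W + (y - x)"
    have "W \<le> t" "t < W + k" "W + (Suc y - x) = Suc t" using True 3 by (auto simp: t_def)
    then show ?thesis
      using True 3 down interlaceD(2) by (simp add: array_of_diagonals_def flip: t_def)
  qed
qed (auto simp: array_of_diagonals_def)

lemma array_of_diagonals_in_box_arrays:
  assumes "s \<in> updown W k"
  shows "array_of_diagonals W k s \<in> box_arrays W k"
proof -
  have "\<forall>x y. W \<le> x \<or> k \<le> y \<longrightarrow> array_of_diagonals W k s x y = 0"
    by (simp add: array_of_diagonals_def)
  then show "array_of_diagonals W k s \<in> box_arrays W k"
    by (simp add: box_arrays_def array_of_diagonals_Suc_row[OF assms] array_of_diagonals_Suc_col[OF assms])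
qed

lemma array_of_diagonals_diagonals: "A \<in> box_arrays W k \<Longrightarrow> array_of_diagonals W k (diagonals W A) = A"
  by (auto simp: box_arrays_def array_of_diagonals_def diagonals_def fun_eq_iff)

lemma diagonals_array_of_diagonals:
  assumes "s \<in> updown W k"
  shows "diagonals W (array_of_diagonals W k s) = s"
proof (intro ext)
  fix t x
  obtain a b where ab: "array_index W (t, x) = (a, b)" by force
  have "diagonals W (array_of_diagonals W k s) t x = (if a < W \<and> b < k then s t x else 0)"
    using diagonal_index_array_index[of W "(t, x)"] ab
    by (simp add: diagonals_eq_array_index array_of_diagonals_eq_diagonal_index)
  moreover have "s t x = 0" if "\<not> (a < W \<and> b < k)"
  proof (rule updown_zero[OF assms])
    show "t \<le> W \<and> (t \<le> x \<or> k \<le> x) \<or> W \<le> t \<and> (W \<le> x \<or> W + k \<le> x + t)"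
      using that ab by (cases "t \<le> W") (auto simp: array_index_def)
  qed
  ultimately show "diagonals W (array_of_diagonals W k s) t x = s t x" by auto
qed

lemma updown_weight_diagonals:
  assumes "A \<in> box_arrays W k"
  shows "updown_weight W k (diagonals W A) = array_weight W k A"
proof -
  let ?T = "{..W + k} \<times> {..<W}" and ?P = "{..<W} \<times> {..<k}"
  let ?f = "\<lambda>(t, x). diagonals W A t x"
  have inj: "inj_on (diagonal_index W) ?P"
    by (auto simp: inj_on_def diagonal_index_def split: if_splits)
  have "diagonal_index W ` ?P \<subseteq> ?T"
    by (auto simp: diagonal_index_def split: if_splits)
  moreover have "?f q = 0" if "q \<in> ?T - diagonal_index W ` ?P" for q
  proof -
    have "array_index W q \<notin> ?P"
      using that diagonal_index_array_index[of W q] by (metis DiffD2 image_eqI)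
    then show ?thesis
      using box_arraysD(3)[OF assms] by (auto simp: diagonals_eq_array_index split: prod.splits)
  qed
  ultimately have "updown_weight W k (diagonals W A) = (\<Sum>q\<in>diagonal_index W ` ?P. ?f q)"
    unfolding updown_weight_def sum.cartesian_product by (intro sum.mono_neutral_right) auto
  also have "\<dots> = (\<Sum>p\<in>?P. ?f (diagonal_index W p))"
    using sum.reindex[OF inj, of ?f] by simp
  also have "\<dots> = (\<Sum>(x, y)\<in>?P. A x y)"
    by (intro sum.cong refl) (auto simp: diagonal_index_def diagonals_def)
  finally show ?thesis
    by (simp add: array_weight_def sum.cartesian_product)
qed

theorem card_box_arrays_updown: "card {A \<in> box_arrays W k. array_weight W k A = n} = card {s \<in> updown W k. updown_weight W k s = n}"
proof (rule bij_betw_same_card[of "diagonals W"], rule bij_betw_byWitness[of _ "array_of_diagonals W k"])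
  show "\<forall>A\<in>{A \<in> box_arrays W k. array_weight W k A = n}. array_of_diagonals W k (diagonals W A) = A" using array_of_diagonals_diagonals by auto
  show "\<forall>s\<in>{s \<in> updown W k. updown_weight W k s = n}. diagonals W (array_of_diagonals W k s) = s" using diagonals_array_of_diagonals by auto
  show "diagonals W ` {A \<in> box_arrays W k. array_weight W k A = n} \<subseteq> {s \<in> updown W k. updown_weight W k s = n}"
    using diagonals_in_updown updown_weight_diagonals by auto
  show "array_of_diagonals W k ` {s \<in> updown W k. updown_weight W k s = n} \<subseteq> {A \<in> box_arrays W k. array_weight W k A = n}"
  proof clarify
    fix s assume s: "s \<in> updown W k" "n = updown_weight W k s"
    have "array_of_diagonals W k s \<in> box_arrays W k" using array_of_diagonals_in_box_arrays[OF s(1)] .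
    moreover have "array_weight W k (array_of_diagonals W k s) = updown_weight W k s"
      using updown_weight_diagonals[OF calculation] diagonals_array_of_diagonals[OF s(1)] by simp
    ultimately show "array_of_diagonals W k s \<in> box_arrays W k \<and> array_weight W k (array_of_diagonals W k s) = updown_weight W k s" by simp
  qed
qed

section \<open>Plane partitions as box arrays\<close>

definition conjugate :: "(nat \<Rightarrow> nat) \<Rightarrow> nat \<Rightarrow> nat" where
  "conjugate f y = card {c. y < f c}"

lemma less_imp_below:
  fixes f :: "nat \<Rightarrow> nat"
  assumes "\<And>c. B \<le> c \<Longrightarrow> f c = 0" "y < f c"
  shows "c < B"
  using assms by (metis not_le not_less_zero)

lemma down_closed_eq_lessThan_card:
  fixes S :: "nat set"
  assumes "finite S" "\<And>c c'. c \<in> S \<Longrightarrow> c' \<le> c \<Longrightarrow> c' \<in> S"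
  shows "S = {..<card S}"
proof -
  obtain N where N: "N \<notin> S" using assms(1) infinite_UNIV_nat ex_new_if_finite by blast
  define M where "M = (LEAST n. n \<notin> S)"
  have M: "M \<notin> S" using N unfolding M_def by (rule LeastI)
  have "S = {..<M}"
  proof
    show "S \<subseteq> {..<M}"
    proof
      fix c assume "c \<in> S"
      then show "c \<in> {..<M}" using M assms(2)[of c M] by (cases "M \<le> c") auto
    qed
    show "{..<M} \<subseteq> S"
    proof
      fix c assume "c \<in> {..<M}"
      then show "c \<in> S" using not_less_Least[of c "\<lambda>n. n \<notin> S"] by (auto simp: M_def)
    qed
  qed
  then show ?thesis by simp
qed

lemma less_conjugate_iff:
  assumes mono: "\<And>c. f (Suc c) \<le> f c" and fin: "\<And>c. B \<le> c \<Longrightarrow> f c = 0"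
  shows "c < conjugate f y \<longleftrightarrow> y < f c"
proof -
  let ?S = "{c. y < f c}"
  have "?S \<subseteq> {..<B}" using less_imp_below[of B f, OF fin] by auto
  then have f: "finite ?S" by (rule finite_subset) simp
  have "?S = {..<card ?S}"
  proof (rule down_closed_eq_lessThan_card[OF f])
    fix c c' assume "c \<in> ?S" "c' \<le> c"
    then show "c' \<in> ?S" using lift_Suc_antimono_le[of f, OF mono, of c' c] by simp
  qed
  then show ?thesis unfolding conjugate_def by (metis lessThan_iff mem_Collect_eq)
qed

lemma conjugate_conjugate:
  assumes mono: "\<And>c. f (Suc c) \<le> f c" and fin: "\<And>c. B \<le> c \<Longrightarrow> f c = 0"
  shows "conjugate (conjugate f) c = f c"
proof -
  have "{y. c < conjugate f y} = {..<f c}" using less_conjugate_iff[of f B, OF mono fin] by auto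
  then show ?thesis by (simp add: conjugate_def)
qed

lemma sum_conjugate:
  assumes fin: "\<And>c. B \<le> c \<Longrightarrow> f c = 0" and bd: "\<And>c. f c \<le> K"
  shows "(\<Sum>y<K. conjugate f y) = (\<Sum>c<B. f c)"
proof -
  have "conjugate f y = (\<Sum>c<B. if y < f c then 1 else 0)" for y
  proof -
    have "{c. y < f c} = {c \<in> {..<B}. y < f c}" using less_imp_below[of B f, OF fin] by auto
    then have "conjugate f y = card {c \<in> {..<B}. y < f c}" by (simp add: conjugate_def)
    also have "\<dots> = (\<Sum>c\<in>{c \<in> {..<B}. y < f c}. 1)" by simp
    also have "\<dots> = (\<Sum>c<B. if y < f c then 1 else 0)" by (rule sum.inter_filter) simp
    finally show ?thesis .
  qed
  then have "(\<Sum>y<K. conjugate f y) = (\<Sum>y<K. \<Sum>c<B. if y < f c then 1 else 0)" by simp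
  also have "\<dots> = (\<Sum>c<B. \<Sum>y<K. if y < f c then 1 else 0)" by (rule sum.swap)
  also have "\<dots> = (\<Sum>c<B. f c)"
  proof (rule sum.cong[OF refl])
    fix c
    have "(\<Sum>y<K. if y < f c then 1 else 0) = (\<Sum>y\<in>{y \<in> {..<K}. y < f c}. 1::nat)"
      by (rule sum.inter_filter[symmetric]) simp
    also have "{y \<in> {..<K}. y < f c} = {..<f c}" using bd[of c] by auto
    finally show "(\<Sum>y<K. if y < f c then 1 else 0) = f c" by simp
  qed
  finally show ?thesis .
qed

text \<open>Conjugating rows turns entries at most k into rows of length at most k.\<close>

definition array_of_pp :: "(nat \<times> nat \<Rightarrow> nat) \<Rightarrow> nat \<Rightarrow> nat \<Rightarrow> nat" where
  "array_of_pp \<pi> x = conjugate (\<lambda>c. \<pi> (x, c))"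

definition pp_of_array :: "(nat \<Rightarrow> nat \<Rightarrow> nat) \<Rightarrow> nat \<times> nat \<Rightarrow> nat" where
  "pp_of_array A = (\<lambda>(x, c). conjugate (A x) c)"

definition bounded_pps :: "nat \<Rightarrow> nat \<Rightarrow> (nat \<times> nat \<Rightarrow> nat) set" where
  "bounded_pps k n = {\<pi>. plane_partition \<pi> \<and> pp_weight \<pi> = n \<and> (\<forall>p. \<pi> p \<le> k)}"

lemma plane_partition_antimono:
  assumes "plane_partition \<pi>" "x' \<le> x" "c' \<le> c"
  shows "\<pi> (x, c) \<le> \<pi> (x', c')"
proof -
  have "\<pi> (x, c) \<le> \<pi> (x, c')"
    using lift_Suc_antimono_le[of "\<lambda>j. \<pi> (x, j)"] assms by (simp add: plane_partition_def)
  also have "\<dots> \<le> \<pi> (x', c')"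
    using lift_Suc_antimono_le[of "\<lambda>i. \<pi> (i, c')"] assms by (simp add: plane_partition_def)
  finally show ?thesis .
qed

lemma plane_partition_row_bound:
  assumes "plane_partition \<pi>"
  obtains B where "\<And>x c. B \<le> c \<Longrightarrow> \<pi> (x, c) = 0"
proof -
  have "finite (snd ` {p. \<pi> p \<noteq> 0})"
    using assms by (simp add: plane_partition_def)
  then obtain B where "\<forall>c\<in>snd ` {p. \<pi> p \<noteq> 0}. c < B"
    unfolding finite_nat_set_iff_bounded by blast
  then show ?thesis
    using that by (metis (mono_tags, lifting) image_eqI mem_Collect_eq not_le snd_conv)
qed

text \<open>A nonzero entry in row x forces x + 1 nonzero entries in column 0.\<close>

lemma plane_partition_rows_below_weight:
  assumes "plane_partition \<pi>" "pp_weight \<pi> \<le> x"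
  shows "\<pi> (x, c) = 0"
proof (rule ccontr)
  assume nz: "\<pi> (x, c) \<noteq> 0"
  have pos: "1 \<le> \<pi> (x', 0)" if "x' \<le> x" for x'
    using plane_partition_antimono[OF assms(1) that, of 0 c] nz by simp
  have "Suc x = (\<Sum>x'\<le>x. (1::nat))" by simp
  also have "\<dots> \<le> (\<Sum>x'\<le>x. \<pi> (x', 0))"
    by (rule sum_mono) (use pos in auto)
  also have "\<dots> = (\<Sum>p\<in>(\<lambda>x'. (x', 0)) ` {..x}. \<pi> p)"
    by (subst sum.reindex) (auto simp: inj_on_def)
  also have "\<dots> \<le> pp_weight \<pi>"
    unfolding pp_weight_def
  proof (rule sum_mono2)
    show "finite {p. \<pi> p \<noteq> 0}" using assms(1) by (simp add: plane_partition_def)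
    show "(\<lambda>x'. (x', 0)) ` {..x} \<subseteq> {p. \<pi> p \<noteq> 0}" using pos by fastforce
  qed auto
  finally show False using assms(2) by simp
qed

lemma array_of_pp_in_box_arrays:
  assumes "\<pi> \<in> bounded_pps k n"
  shows "array_of_pp \<pi> \<in> box_arrays n k"
proof -
  have pp: "plane_partition \<pi>" and bd: "\<And>p. \<pi> p \<le> k" and w: "pp_weight \<pi> = n"
    using assms by (auto simp: bounded_pps_def)
  obtain B where B: "\<And>x c. B \<le> c \<Longrightarrow> \<pi> (x, c) = 0"
    using plane_partition_row_bound[OF pp] by blast
  have fin: "finite {c. y < \<pi> (x, c)}" for x y
    by (rule finite_subset[of _ "{..<B}"]) (use less_imp_below[of B "\<lambda>c. \<pi> (x, c)", OF B] in auto)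
  have "array_of_pp \<pi> (Suc x) y \<le> array_of_pp \<pi> x y" for x y
    unfolding array_of_pp_def conjugate_def
  proof (rule card_mono[OF fin], clarify)
    fix c assume "y < \<pi> (Suc x, c)"
    then show "y < \<pi> (x, c)"
      using plane_partition_antimono[OF pp, of x "Suc x" c c] by simp
  qed
  moreover have "array_of_pp \<pi> x (Suc y) \<le> array_of_pp \<pi> x y" for x y
    unfolding array_of_pp_def conjugate_def by (rule card_mono[OF fin]) auto
  moreover have "array_of_pp \<pi> x y = 0" if "n \<le> x \<or> k \<le> y" for x y
  proof -
    have "\<pi> (x, c) \<le> y" for c
      using that bd[of "(x, c)"] plane_partition_rows_below_weight[OF pp, of x c] w by auto
    then have "{c. y < \<pi> (x, c)} = {}"
      by (simp add: not_less)
    then show ?thesis by (simp add: array_of_pp_def conjugate_def)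
  qed
  ultimately show ?thesis by (auto simp: box_arrays_def)
qed

lemma array_weight_array_of_pp:
  assumes "\<pi> \<in> bounded_pps k n"
  shows "array_weight n k (array_of_pp \<pi>) = n"
proof -
  have pp: "plane_partition \<pi>" and bd: "\<And>p. \<pi> p \<le> k" and w: "pp_weight \<pi> = n"
    using assms by (auto simp: bounded_pps_def)
  obtain B where B: "\<And>x c. B \<le> c \<Longrightarrow> \<pi> (x, c) = 0"
    using plane_partition_row_bound[OF pp] by blast
  have "array_weight n k (array_of_pp \<pi>) = (\<Sum>x<n. \<Sum>c<B. \<pi> (x, c))"
    unfolding array_weight_def array_of_pp_def
    by (intro sum.cong refl sum_conjugate) (use B bd in auto)
  also have "\<dots> = (\<Sum>p\<in>{..<n} \<times> {..<B}. \<pi> p)"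
    by (simp add: sum.cartesian_product)
  also have "\<dots> = pp_weight \<pi>"
    unfolding pp_weight_def
  proof (rule sum.mono_neutral_right)
    show "{p. \<pi> p \<noteq> 0} \<subseteq> {..<n} \<times> {..<B}"
    proof
      fix p assume "p \<in> {p. \<pi> p \<noteq> 0}"
      moreover obtain x c where p: "p = (x, c)" by (cases p)
      ultimately have "\<not> B \<le> c" "\<not> n \<le> x"
        using B plane_partition_rows_below_weight[OF pp, of x c] w by auto
      then show "p \<in> {..<n} \<times> {..<B}" by (simp add: p)
    qed
  qed auto
  finally show ?thesis using w by simp
qed

lemma pp_of_array_of_pp:
  assumes "plane_partition \<pi>"
  shows "pp_of_array (array_of_pp \<pi>) = \<pi>"
proof (rule ext, clarify)
  fix x c
  obtain B where "\<And>x c. B \<le> c \<Longrightarrow> \<pi> (x, c) = 0"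
    using plane_partition_row_bound[OF assms] by blast
  then show "pp_of_array (array_of_pp \<pi>) (x, c) = \<pi> (x, c)"
    using conjugate_conjugate[of "\<lambda>j. \<pi> (x, j)" B] assms
    by (simp add: pp_of_array_def array_of_pp_def plane_partition_def)
qed

lemma box_arrays_le_weight:
  assumes "A \<in> box_arrays W k"
  shows "A x y \<le> array_weight W k A"
proof (cases "x < W \<and> y < k")
  case True
  have "A x y \<le> (\<Sum>y<k. A x y)"
    by (rule member_le_sum) (use True in auto)
  also have "\<dots> \<le> (\<Sum>x<W. \<Sum>y<k. A x y)"
    by (rule member_le_sum[of x "{..<W}" "\<lambda>x. \<Sum>y<k. A x y"]) (use True in auto)
  finally show ?thesis by (simp add: array_weight_def)
next
  case False
  then show ?thesis using assms by (auto simp: box_arrays_def not_less)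
qed

lemma box_arrays_conjugate_support:
  assumes "A \<in> box_arrays W k"
  shows "{y. c < A x y} \<subseteq> {..<k}"
proof
  fix y assume y: "y \<in> {y. c < A x y}"
  show "y \<in> {..<k}"
  proof (rule ccontr)
    assume "y \<notin> {..<k}"
    then have "A x y = 0" using assms by (simp add: box_arrays_def)
    with y show False by simp
  qed
qed

lemma pp_of_array_zero:
  assumes "A \<in> box_arrays n k" "array_weight n k A = n" "n \<le> x \<or> n \<le> c"
  shows "pp_of_array A (x, c) = 0"
proof -
  have "A x y \<le> c" for y
    using assms box_arrays_le_weight[OF assms(1), of x y] by (auto simp: box_arrays_def)
  then have "{y. c < A x y} = {}" by (simp add: not_less)
  then show ?thesis by (simp add: pp_of_array_def conjugate_def)
qed

lemma pp_of_array_support: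
  assumes A: "A \<in> box_arrays n k" and w: "array_weight n k A = n"
  shows "{p. pp_of_array A p \<noteq> 0} \<subseteq> {..<n} \<times> {..<n}"
proof
  fix p assume "p \<in> {p. pp_of_array A p \<noteq> 0}"
  moreover obtain x c where p: "p = (x, c)" by (cases p)
  ultimately have "\<not> (n \<le> x \<or> n \<le> c)" using pp_of_array_zero[OF A w] by auto
  then show "p \<in> {..<n} \<times> {..<n}" by (simp add: p)
qed

lemma pp_weight_pp_of_array:
  assumes A: "A \<in> box_arrays n k" and w: "array_weight n k A = n"
  shows "pp_weight (pp_of_array A) = n"
proof -
  have "pp_weight (pp_of_array A) = (\<Sum>p\<in>{..<n} \<times> {..<n}. pp_of_array A p)"
    unfolding pp_weight_def
    by (rule sum.mono_neutral_left) (use pp_of_array_support[OF A w] in auto)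
  also have "\<dots> = (\<Sum>x<n. \<Sum>c<n. conjugate (A x) c)"
    by (simp add: sum.cartesian_product pp_of_array_def)
  also have "\<dots> = (\<Sum>x<n. \<Sum>y<k. A x y)"
  proof -
    have "A x y = 0" if "k \<le> y" for x y using box_arraysD(3)[OF A] that by simp
    moreover have "A x y \<le> n" for x y using box_arrays_le_weight[OF A] w by simp
    ultimately show ?thesis by (intro sum.cong refl sum_conjugate)
  qed
  finally show ?thesis using w by (simp add: array_weight_def)
qed

lemma pp_of_array_in_bounded_pps:
  assumes A: "A \<in> box_arrays n k" and w: "array_weight n k A = n"
  shows "pp_of_array A \<in> bounded_pps k n"
proof -
  have fin: "finite {y. c < A x y}" for c x
    using box_arrays_conjugate_support[OF A] by (rule finite_subset) simp
  have "plane_partition (pp_of_array A)"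
    unfolding plane_partition_def
  proof (intro conjI allI)
    show "finite {p. pp_of_array A p \<noteq> 0}"
      using pp_of_array_support[OF A w] by (rule finite_subset) simp
    show "pp_of_array A (i, Suc j) \<le> pp_of_array A (i, j)" for i j
      unfolding pp_of_array_def conjugate_def by (simp add: card_mono[OF fin] subset_iff)
    have "{y. j < A (Suc i) y} \<subseteq> {y. j < A i y}" for i j
      using box_arraysD(1)[OF A] by (auto intro: order.strict_trans2)
    then show "pp_of_array A (Suc i, j) \<le> pp_of_array A (i, j)" for i j
      unfolding pp_of_array_def conjugate_def by (simp add: card_mono[OF fin])
  qed
  moreover have "pp_of_array A (x, c) \<le> k" for x c
    using card_mono[OF _ box_arrays_conjugate_support[OF A, of c x]]
    by (simp add: pp_of_array_def conjugate_def)
  ultimately show ?thesis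
    using pp_weight_pp_of_array[OF A w] by (auto simp: bounded_pps_def)
qed

lemma array_of_pp_of_array:
  assumes "A \<in> box_arrays W k"
  shows "array_of_pp (pp_of_array A) = A"
proof (intro ext)
  fix x y
  show "array_of_pp (pp_of_array A) x y = A x y"
    using conjugate_conjugate[of "A x" k y] assms
    by (simp add: pp_of_array_def array_of_pp_def box_arrays_def)
qed

theorem pl_eq_card_box_arrays: "pl k n = card {A \<in> box_arrays n k. array_weight n k A = n}"
  unfolding pl_def bounded_pps_def[symmetric]
proof (rule bij_betw_same_card[of array_of_pp], rule bij_betw_byWitness[of _ pp_of_array])
  show "\<forall>\<pi>\<in>bounded_pps k n. pp_of_array (array_of_pp \<pi>) = \<pi>"
    by (simp add: bounded_pps_def pp_of_array_of_pp)
  show "\<forall>A\<in>{A \<in> box_arrays n k. array_weight n k A = n}. array_of_pp (pp_of_array A) = A"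
    by (auto simp: array_of_pp_of_array)
  show "array_of_pp ` bounded_pps k n \<subseteq> {A \<in> box_arrays n k. array_weight n k A = n}"
    by (auto simp: array_of_pp_in_box_arrays array_weight_array_of_pp)
  show "pp_of_array ` {A \<in> box_arrays n k. array_weight n k A = n} \<subseteq> bounded_pps k n"
    by (auto simp: pp_of_array_in_bounded_pps)
qed

section \<open>The generating function\<close>

theorem pl_eq_card_box_matrices: "pl k n = card {m \<in> box_matrices n k. matrix_weight n k m = n}"
  using pl_eq_card_box_arrays card_box_arrays_updown card_box_matrices_updown by simp

definition fps_geometric :: "nat \<Rightarrow> int fps" where
  "fps_geometric h = Abs_fps (\<lambda>i. if h dvd i then 1 else 0)"

definition weighted_fns :: "'c set \<Rightarrow> ('c \<Rightarrow> nat) \<Rightarrow> nat \<Rightarrow> ('c \<Rightarrow> nat) set" where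
  "weighted_fns C w n = {m. (\<forall>c. c \<notin> C \<longrightarrow> m c = 0) \<and> (\<Sum>c\<in>C. m c * w c) = n}"

lemma fps_geometric_mult_nth:
  assumes "0 < h"
  shows "fps_nth (fps_geometric h * P) n = (\<Sum>v\<in>{v. v * h \<le> n}. fps_nth P (n - v * h))"
proof -
  have "fps_nth (fps_geometric h * P) n = (\<Sum>i=0..n. (if h dvd i then 1 else 0) * fps_nth P (n - i))"
    by (simp add: fps_mult_nth fps_geometric_def)
  also have "\<dots> = (\<Sum>i=0..n. if h dvd i then fps_nth P (n - i) else 0)"
    by (rule sum.cong) auto
  also have "\<dots> = (\<Sum>i\<in>{i \<in> {0..n}. h dvd i}. fps_nth P (n - i))"
    by (rule sum.inter_filter[symmetric]) simp
  also have "{i \<in> {0..n}. h dvd i} = (\<lambda>v. v * h) ` {v. v * h \<le> n}"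
    by (auto simp: image_iff dvd_def mult.commute)
  also have "(\<Sum>i\<in>(\<lambda>v. v * h) ` {v. v * h \<le> n}. fps_nth P (n - i)) = (\<Sum>v\<in>{v. v * h \<le> n}. fps_nth P (n - v * h))"
    by (subst sum.reindex) (use assms in \<open>auto simp: inj_on_def\<close>)
  finally show ?thesis .
qed

lemma weighted_fns_insert:
  assumes "finite C" "a \<notin> C"
  shows "weighted_fns (insert a C) w n
    = (\<Union>v\<in>{v. v * w a \<le> n}. (\<lambda>m. m(a := v)) ` weighted_fns C w (n - v * w a))"
proof
  have sum_upd: "(\<Sum>c\<in>C. (m(a := v)) c * w c) = (\<Sum>c\<in>C. m c * w c)" for m v
    by (rule sum.cong) (use assms in auto)
  show "weighted_fns (insert a C) w n
      \<subseteq> (\<Union>v\<in>{v. v * w a \<le> n}. (\<lambda>m. m(a := v)) ` weighted_fns C w (n - v * w a))"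
  proof
    fix m assume "m \<in> weighted_fns (insert a C) w n"
    then have "m(a := 0) \<in> weighted_fns C w (n - m a * w a)" "m a * w a \<le> n"
      using assms sum_upd[of m 0] by (auto simp: weighted_fns_def)
    then show "m \<in> (\<Union>v\<in>{v. v * w a \<le> n}. (\<lambda>m. m(a := v)) ` weighted_fns C w (n - v * w a))"
      by (auto intro!: bexI[of _ "m a"] image_eqI[of _ _ "m(a := 0)"])
  qed
  show "(\<Union>v\<in>{v. v * w a \<le> n}. (\<lambda>m. m(a := v)) ` weighted_fns C w (n - v * w a))
      \<subseteq> weighted_fns (insert a C) w n"
    using assms sum_upd by (auto simp: weighted_fns_def)
qed

lemma card_weighted_fns:
  assumes "finite C" "\<And>c. c \<in> C \<Longrightarrow> 0 < w c"
  shows "finite (weighted_fns C w n) \<and> int (card (weighted_fns C w n)) = fps_nth (\<Prod>c\<in>C. fps_geometric (w c)) n"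
  using assms
proof (induction C arbitrary: n rule: finite_induct)
  case empty
  have "weighted_fns {} w n = (if n = 0 then {\<lambda>_. 0} else {})" by (auto simp: weighted_fns_def)
  then show ?case by simp
next
  case (insert a C)
  let ?V = "{v. v * w a \<le> n}" and ?S = "\<lambda>v. (\<lambda>m. m(a := v)) ` weighted_fns C w (n - v * w a)"
  have wa: "0 < w a" using insert.prems by simp
  note IH = insert.IH[OF insert.prems]
  have finV: "finite ?V"
    by (rule finite_subset[of _ "{..n}"]) (use wa in \<open>auto intro: order_trans[rotated]\<close>)
  have inj: "inj_on (\<lambda>m. m(a := v)) (weighted_fns C w n')" for v n'
  proof (rule inj_onI)
    fix x y assume "x \<in> weighted_fns C w n'" "y \<in> weighted_fns C w n'" "x(a := v) = y(a := v)"
    then show "x = y"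
      using insert.hyps by (auto simp: weighted_fns_def fun_eq_iff) (metis fun_upd_apply)
  qed
  have disj: "\<forall>v\<in>?V. \<forall>v'\<in>?V. v \<noteq> v' \<longrightarrow> ?S v \<inter> ?S v' = {}"
    by auto (metis fun_upd_same)
  have fins: "\<forall>v\<in>?V. finite (?S v)" using IH by auto
  have "finite (weighted_fns (insert a C) w n)"
    using finV fins by (simp add: weighted_fns_insert[OF insert.hyps])
  moreover have "int (card (weighted_fns (insert a C) w n)) = (\<Sum>v\<in>?V. int (card (weighted_fns C w (n - v * w a))))"
    by (simp add: weighted_fns_insert[OF insert.hyps] card_UN_disjoint[OF finV fins disj] card_image[OF inj])
  moreover have "fps_nth (\<Prod>c\<in>insert a C. fps_geometric (w c)) n
      = (\<Sum>v\<in>?V. fps_nth (\<Prod>c\<in>C. fps_geometric (w c)) (n - v * w a))"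
    using insert.hyps by (simp add: fps_geometric_mult_nth[OF wa])
  ultimately show ?case using IH by simp
qed

lemma prod_pair_weights_reindex:
  fixes f :: "nat \<Rightarrow> 'a::comm_monoid_mult"
  shows "(\<Prod>q\<in>{..<k} \<times> {..<n}. f (n - snd q + (k - 1 - fst q))) = (\<Prod>i<k. \<Prod>j<n. f (i + j + 1))"
proof -
  have "(\<Prod>q\<in>{..<k} \<times> {..<n}. f (n - snd q + (k - 1 - fst q)))
      = (\<Prod>q\<in>{..<k} \<times> {..<n}. f (fst q + snd q + 1))"
    by (rule prod.reindex_bij_witness[of _ "\<lambda>(i, j). (k - 1 - i, n - 1 - j)"
          "\<lambda>(i, j). (k - 1 - i, n - 1 - j)"]) (auto intro!: arg_cong[where f = f])
  then show ?thesis
    by (simp add: prod.cartesian_product split_def)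
qed

theorem pl_eq_coeff_prod_geometric:
  "int (pl k n) = fps_nth (\<Prod>i<k. \<Prod>j<n. fps_geometric (i + j + 1)) n"
proof -
  let ?w = "\<lambda>p. n - snd p + (k - 1 - fst p)"
  have "{m \<in> box_matrices n k. matrix_weight n k m = n} = weighted_fns ({..<k} \<times> {..<n}) ?w n"
  proof -
    have "matrix_weight n k m = (\<Sum>p\<in>{..<k} \<times> {..<n}. m p * ?w p)" for m
      unfolding matrix_weight_def sum.cartesian_product by (intro sum.cong refl) auto
    moreover have "m \<in> box_matrices n k \<longleftrightarrow> (\<forall>c. c \<notin> {..<k} \<times> {..<n} \<longrightarrow> m c = 0)" for m
      by (auto simp: box_matrices_def not_less)
    ultimately show ?thesis by (auto simp: weighted_fns_def)
  qed
  then show ?thesis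
    using pl_eq_card_box_matrices[of k n] card_weighted_fns[of "{..<k} \<times> {..<n}" ?w n]
      prod_pair_weights_reindex[where f = fps_geometric and k = k and n = n] by auto
qed

section \<open>Congruences modulo a prime\<close>

definition fps_cong_upto :: "nat \<Rightarrow> nat \<Rightarrow> int fps \<Rightarrow> int fps \<Rightarrow> bool" where
  "fps_cong_upto p N f g \<longleftrightarrow> (\<forall>i\<le>N. int p dvd fps_nth f i - fps_nth g i)"

lemma fps_cong_upto_refl: "fps_cong_upto p N f f"
  by (simp add: fps_cong_upto_def)

lemma fps_cong_upto_sym: "fps_cong_upto p N f g \<Longrightarrow> fps_cong_upto p N g f"
  unfolding fps_cong_upto_def by (metis dvd_minus_iff minus_diff_eq)

lemma fps_cong_upto_trans:
  "fps_cong_upto p N f g \<Longrightarrow> fps_cong_upto p N g h \<Longrightarrow> fps_cong_upto p N f h"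
  unfolding fps_cong_upto_def by (metis diff_add_cancel add_diff_eq dvd_add)

lemma fps_cong_upto_mult:
  assumes "fps_cong_upto p N f f'" "fps_cong_upto p N g g'"
  shows "fps_cong_upto p N (f * g) (f' * g')"
  unfolding fps_cong_upto_def
proof (intro allI impI)
  fix i assume i: "i \<le> N"
  have "fps_nth (f * g) i - fps_nth (f' * g') i =
    (\<Sum>j=0..i. (fps_nth f j - fps_nth f' j) * fps_nth g (i - j)
              + fps_nth f' j * (fps_nth g (i - j) - fps_nth g' (i - j)))"
    by (simp add: fps_mult_nth sum_subtractf[symmetric] algebra_simps)
  also have "int p dvd \<dots>"
    using assms i by (intro dvd_sum dvd_add dvd_mult2 dvd_mult) (auto simp: fps_cong_upto_def)
  finally show "int p dvd fps_nth (f * g) i - fps_nth (f' * g') i" .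
qed

lemma fps_cong_upto_prod:
  "finite I \<Longrightarrow> (\<And>i. i \<in> I \<Longrightarrow> fps_cong_upto p N (f i) (g i))
    \<Longrightarrow> fps_cong_upto p N (\<Prod>i\<in>I. f i) (\<Prod>i\<in>I. g i)"
  by (induction I rule: finite_induct) (auto simp: fps_cong_upto_refl fps_cong_upto_mult)

lemma fps_cong_upto_of_dvd:
  assumes "(of_nat p :: int fps) dvd f - g"
  shows "fps_cong_upto p N f g"
proof -
  obtain c where "f - g = fps_const (int p) * c"
    using assms by (auto simp: dvd_def fps_of_nat)
  then have "fps_nth f i - fps_nth g i = int p * fps_nth c i" for i
    by (metis fps_mult_left_const_nth fps_sub_nth)
  then show ?thesis by (simp add: fps_cong_upto_def)
qed

lemma fps_cong_upto_geometric_one: "N < h \<Longrightarrow> fps_cong_upto p N (fps_geometric h) 1"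
  by (auto simp: fps_cong_upto_def fps_geometric_def dest: dvd_imp_le)

lemma fps_geometric_inverse: "0 < h \<Longrightarrow> (1 - fps_X ^ h) * fps_geometric h = 1"
proof (rule fps_ext)
  fix i assume h: "0 < h"
  have "fps_nth ((1 - fps_X ^ h) * fps_geometric h) i
      = fps_nth (fps_geometric h) i - fps_nth (fps_X ^ h * fps_geometric h) i"
    by (simp add: algebra_simps)
  also have "\<dots> = fps_nth 1 i"
  proof (cases "i < h")
    case True
    then show ?thesis
      using h by (auto simp: fps_X_power_mult_nth fps_geometric_def dest: dvd_imp_le)
  next
    case False
    then have "h dvd i \<longleftrightarrow> h dvd (i - h)" by (simp add: dvd_minus_self)
    then show ?thesis using False h by (simp add: fps_X_power_mult_nth fps_geometric_def)
  qed
  finally show "fps_nth ((1 - fps_X ^ h) * fps_geometric h) i = fps_nth 1 i" .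
qed

lemma prime_dvd_neg_one_power_add_one:
  assumes "prime p"
  shows "(of_nat p :: 'a::comm_ring_1) dvd (- 1) ^ p + 1"
proof (cases "p = 2")
  case False
  then have "odd p"
    using prime_odd_nat[OF assms] prime_ge_2_nat[OF assms] by simp
  then show ?thesis by simp
qed simp

lemma prime_dvd_one_minus_power:
  fixes x :: "'a::comm_ring_1"
  assumes p: "prime p"
  shows "of_nat p dvd (1 - x) ^ p - (1 - x ^ p)"
proof -
  have p0: "0 < p" using p prime_gt_0_nat by blast
  let ?t = "\<lambda>k. of_nat (p choose k) * (- x) ^ k :: 'a"
  have "(1 - x) ^ p = (\<Sum>k\<le>p. ?t k)"
    using binomial_ring[of "- x" 1 p] by simp
  also have "{..p} = insert 0 (insert p {1..<p})" using p0 by auto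
  also have "(\<Sum>k\<in>insert 0 (insert p {1..<p}). ?t k) = 1 + (- x) ^ p + (\<Sum>k\<in>{1..<p}. ?t k)"
    using p0 by (simp add: add.assoc)
  finally have "(1 - x) ^ p - (1 - x ^ p) = ((- 1) ^ p + 1) * x ^ p + (\<Sum>k\<in>{1..<p}. ?t k)"
    by (simp add: power_minus' algebra_simps)
  moreover have "of_nat p dvd (\<Sum>k\<in>{1..<p}. ?t k)"
  proof (rule dvd_sum)
    fix k assume "k \<in> {1..<p}"
    then have "p dvd (p choose k)" using dvd_choose_prime[of k p] p by auto
    then obtain q where "p choose k = p * q" by (auto simp: dvd_def)
    then show "of_nat p dvd ?t k" by (simp add: mult.assoc)
  qed
  ultimately show ?thesis
    using prime_dvd_neg_one_power_add_one[OF p] by (metis dvd_add dvd_mult2)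
qed


text \<open>Frobenius: (1 - X^h)^p is congruent to 1 - X^(p h), and both sides are inverted.\<close>

lemma fps_geometric_power_prime:
  assumes p: "prime p" and h: "0 < h"
  shows "(of_nat p :: int fps) dvd fps_geometric h ^ p - fps_geometric (p * h)"
proof -
  let ?u = "1 - fps_X ^ h :: int fps" and ?a = "fps_geometric h" and ?b = "fps_geometric (p * h)"
  have ua: "?u * ?a = 1" using fps_geometric_inverse[OF h] .
  have vb: "(1 - fps_X ^ (h * p)) * ?b = 1"
    using fps_geometric_inverse[of "p * h"] h p prime_gt_0_nat by (simp add: mult.commute)
  have au: "?a ^ p * ?u ^ p = 1"
    by (metis ua mult.commute power_mult_distrib power_one)
  have "?a ^ p * ?b * ((1 - fps_X ^ (h * p)) - ?u ^ p)
      = ?a ^ p * ((1 - fps_X ^ (h * p)) * ?b) - ?b * (?a ^ p * ?u ^ p)"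
    by (simp add: algebra_simps)
  also have "\<dots> = ?a ^ p - ?b"
    by (simp only: vb au mult_1_right)
  finally have "?a ^ p - ?b = ?a ^ p * ?b * ((1 - fps_X ^ (h * p)) - ?u ^ p)" ..
  moreover have "(of_nat p :: int fps) dvd (1 - fps_X ^ (h * p)) - ?u ^ p"
    using prime_dvd_one_minus_power[OF p, of "fps_X ^ h :: int fps"]
    by (metis dvd_minus_iff minus_diff_eq power_mult)
  ultimately show ?thesis by (metis dvd_mult)
qed

definition qpochhammer :: "nat \<Rightarrow> int fps" where
  "qpochhammer i = (\<Prod>h\<in>{1..i}. 1 - fps_X ^ h)"

definition inv_qpochhammer :: "nat \<Rightarrow> int fps" where
  "inv_qpochhammer n = (\<Prod>h\<in>{1..n}. fps_geometric h)"

definition dilated_inv_qpochhammer :: "nat \<Rightarrow> nat \<Rightarrow> int fps" where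
  "dilated_inv_qpochhammer p n = (\<Prod>h\<in>{1..n}. fps_geometric (p * h))"

definition qpochhammer_prod :: "nat \<Rightarrow> int fps" where
  "qpochhammer_prod p = (\<Prod>i<p. qpochhammer i)"

lemma prod_geometric_split:
  "a \<le> b \<Longrightarrow> (\<Prod>h\<in>{1..b}. fps_geometric (f h))
     = (\<Prod>h\<in>{1..a}. fps_geometric (f h)) * (\<Prod>h\<in>{Suc a..b}. fps_geometric (f h))"
  by (subst prod.union_disjoint[symmetric]) (auto intro: prod.cong)

lemma fps_cong_upto_prod_geometric_one:
  "(\<And>h. h \<in> H \<Longrightarrow> N < f h) \<Longrightarrow> finite H \<Longrightarrow> fps_cong_upto p N (\<Prod>h\<in>H. fps_geometric (f h)) 1"
  using fps_cong_upto_prod[of H p N "\<lambda>h. fps_geometric (f h)" "\<lambda>_. 1"]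
  by (simp add: fps_cong_upto_geometric_one)

text \<open>Only the factors 1/(1 - q^h) with h \<le> n matter below degree n + 1.\<close>

lemma fps_cong_upto_row:
  "fps_cong_upto p n (\<Prod>j<n. fps_geometric (i + j + 1)) (qpochhammer i * inv_qpochhammer n)"
proof -
  have "(\<Prod>j<n. fps_geometric (i + j + 1)) = (\<Prod>h\<in>{Suc i..i + n}. fps_geometric h)"
    by (rule prod.reindex_bij_witness[of _ "\<lambda>h. h - Suc i" "\<lambda>j. i + j + 1"]) auto
  also have "\<dots> = qpochhammer i * (\<Prod>h\<in>{1..i + n}. fps_geometric h)"
  proof -
    have "qpochhammer i * (\<Prod>h\<in>{1..i}. fps_geometric h) = 1"
      unfolding qpochhammer_def prod.distrib[symmetric]
      by (rule prod.neutral) (auto simp: fps_geometric_inverse)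
    then show ?thesis
      using prod_geometric_split[of i "i + n" id] by (simp add: mult.assoc[symmetric])
  qed
  also have "\<dots> = qpochhammer i * inv_qpochhammer n * (\<Prod>h\<in>{Suc n..i + n}. fps_geometric h)"
    using prod_geometric_split[of n "i + n" id] by (simp add: inv_qpochhammer_def mult.assoc)
  finally have eq: "(\<Prod>j<n. fps_geometric (i + j + 1))
      = qpochhammer i * inv_qpochhammer n * (\<Prod>h\<in>{Suc n..i + n}. fps_geometric h)" .
  have "fps_cong_upto p n (\<Prod>h\<in>{Suc n..i + n}. fps_geometric h) 1"
    using fps_cong_upto_prod_geometric_one[of "{Suc n..i + n}" n id] by simp
  then have "fps_cong_upto p n (qpochhammer i * inv_qpochhammer n * (\<Prod>h\<in>{Suc n..i + n}. fps_geometric h))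
      (qpochhammer i * inv_qpochhammer n * 1)"
    by (rule fps_cong_upto_mult[OF fps_cong_upto_refl])
  then show ?thesis unfolding eq by simp
qed

lemma fps_cong_upto_inv_qpochhammer_power:
  "prime p \<Longrightarrow> fps_cong_upto p N (inv_qpochhammer n ^ p) (dilated_inv_qpochhammer p n)"
  unfolding inv_qpochhammer_def dilated_inv_qpochhammer_def prod_power_distrib
  by (intro fps_cong_upto_prod fps_cong_upto_of_dvd fps_geometric_power_prime) auto

lemma fps_cong_upto_dilated_inv_qpochhammer:
  assumes "m \<le> N" "0 < p"
  shows "fps_cong_upto p m (dilated_inv_qpochhammer p N) (dilated_inv_qpochhammer p m)"
proof -
  have "fps_cong_upto p m (\<Prod>h\<in>{Suc m..N}. fps_geometric (p * h)) 1"
    using assms by (intro fps_cong_upto_prod_geometric_one) (auto intro: less_le_trans)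
  from fps_cong_upto_mult[OF fps_cong_upto_refl this]
  show ?thesis
    using prod_geometric_split[of m N "(*) p"] assms(1)
    by (simp add: dilated_inv_qpochhammer_def)
qed

theorem pl_prime_cong:
  assumes "prime p" "m \<le> N"
  shows "int p dvd int (pl p m) - fps_nth (qpochhammer_prod p * dilated_inv_qpochhammer p N) m"
proof -
  have "fps_cong_upto p m (\<Prod>i<p. \<Prod>j<m. fps_geometric (i + j + 1)) (\<Prod>i<p. qpochhammer i * inv_qpochhammer m)"
    by (intro fps_cong_upto_prod fps_cong_upto_row) simp
  also have "(\<Prod>i<p. qpochhammer i * inv_qpochhammer m) = qpochhammer_prod p * inv_qpochhammer m ^ p"
    by (simp add: qpochhammer_prod_def prod.distrib)
  finally have "fps_cong_upto p m (\<Prod>i<p. \<Prod>j<m. fps_geometric (i + j + 1))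
      (qpochhammer_prod p * dilated_inv_qpochhammer p N)"
    using assms prime_gt_0_nat
    by (meson fps_cong_upto_inv_qpochhammer_power fps_cong_upto_dilated_inv_qpochhammer
        fps_cong_upto_mult fps_cong_upto_refl fps_cong_upto_sym fps_cong_upto_trans)
  then show ?thesis
    using pl_eq_coeff_prod_geometric[of p m] by (simp add: fps_cong_upto_def)
qed

section \<open>The explicit congruences\<close>

lemma fps_nth_mult_not_dvd:
  fixes f g :: "'a::semiring_0 fps"
  assumes "\<And>j. \<not> p dvd j \<Longrightarrow> fps_nth f j = 0" "\<And>j. \<not> p dvd j \<Longrightarrow> fps_nth g j = 0"
    and "\<not> p dvd j"
  shows "fps_nth (f * g) j = 0"
  unfolding fps_mult_nth
proof (rule sum.neutral, clarify)
  fix i assume i: "i \<in> {0..j}"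
  have "\<not> (p dvd i \<and> p dvd j - i)"
    using assms(3) i dvd_add[of p i "j - i"] by auto
  then show "fps_nth f i * fps_nth g (j - i) = 0"
    using assms(1,2) by auto
qed

lemma fps_nth_dilated_inv_qpochhammer:
  "\<not> p dvd j \<Longrightarrow> fps_nth (dilated_inv_qpochhammer p N) j = 0"
proof -
  have "\<not> p dvd j \<longrightarrow> fps_nth (\<Prod>h\<in>H. fps_geometric (p * h)) j = 0" if "finite H" for H j
    using that
  proof (induction H arbitrary: j rule: finite_induct)
    case (insert a H)
    have "\<not> p dvd j \<Longrightarrow> fps_nth (fps_geometric (p * a)) j = 0" for j
      by (auto simp: fps_geometric_def dest: dvd_mult_left)
    with insert show ?case by (auto intro: fps_nth_mult_not_dvd)
  qed simp
  then show "\<not> p dvd j \<Longrightarrow> fps_nth (dilated_inv_qpochhammer p N) j = 0"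
    by (simp add: dilated_inv_qpochhammer_def)
qed

lemma dvd_fps_nth_mult_residue:
  assumes "\<And>i. i mod p = m mod p \<Longrightarrow> int p dvd fps_nth f i"
    and "\<And>j. \<not> p dvd j \<Longrightarrow> fps_nth g j = 0"
  shows "int p dvd fps_nth (f * g) m"
  unfolding fps_mult_nth
proof (rule dvd_sum)
  fix i assume i: "i \<in> {0..m}"
  show "int p dvd fps_nth f i * fps_nth g (m - i)"
  proof (cases "p dvd m - i")
    case True
    then have "i mod p = m mod p"
      using i by (metis add_diff_inverse_nat atLeastAtMost_iff mod_add_self1 dvd_div_mult_self
          mod_mult_self1 not_le add.commute)
    then show ?thesis using assms(1) by simp
  next
    case False
    then show ?thesis using assms(2) by simp
  qed
qed

fun list_add :: "int list \<Rightarrow> int list \<Rightarrow> int list" where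
  "list_add [] ys = ys"
| "list_add xs [] = xs"
| "list_add (x # xs) (y # ys) = (x + y) # list_add xs ys"

fun list_mult :: "int list \<Rightarrow> int list \<Rightarrow> int list" where
  "list_mult [] ys = []"
| "list_mult (x # xs) ys = list_add (map ((*) x) ys) (0 # list_mult xs ys)"

definition fps_of_list :: "int list \<Rightarrow> int fps" where
  "fps_of_list xs = Abs_fps (\<lambda>i. if i < length xs then xs ! i else 0)"

lemma fps_nth_fps_of_list: "fps_nth (fps_of_list xs) i = (if i < length xs then xs ! i else 0)"
  by (simp add: fps_of_list_def)

lemma fps_of_list_Nil: "fps_of_list [] = 0"
  by (simp add: fps_ext fps_of_list_def)

lemma fps_of_list_Cons: "fps_of_list (x # xs) = fps_const x + fps_X * fps_of_list xs"
  by (rule fps_ext) (auto simp: fps_nth_fps_of_list fps_X_mult_nth nth_Cons split: nat.split)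

lemma fps_of_list_add: "fps_of_list (list_add xs ys) = fps_of_list xs + fps_of_list ys"
  by (induction xs ys rule: list_add.induct) (auto simp: fps_of_list_Cons fps_of_list_Nil algebra_simps)

lemma fps_of_list_mult: "fps_of_list (list_mult xs ys) = fps_of_list xs * fps_of_list ys"
proof -
  have "fps_of_list (map ((*) x) ys) = fps_const x * fps_of_list ys" for x
    by (induction ys) (auto simp: fps_of_list_Cons fps_of_list_Nil algebra_simps)
  then show ?thesis
    by (induction xs) (auto simp: fps_of_list_Cons fps_of_list_Nil fps_of_list_add algebra_simps)
qed

definition one_minus_X_power_list :: "nat \<Rightarrow> int list" where
  "one_minus_X_power_list h = list_add [1] (replicate h 0 @ [-1])"

lemma fps_of_list_one_minus_X_power: "fps_of_list (one_minus_X_power_list h) = 1 - fps_X ^ h"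
proof -
  have "fps_of_list (replicate h 0 @ xs) = fps_X ^ h * fps_of_list xs" for xs
    by (induction h) (auto simp: fps_of_list_Cons)
  then show ?thesis
    by (simp add: one_minus_X_power_list_def fps_of_list_add fps_of_list_Cons fps_of_list_Nil
        fps_const_neg[symmetric])
qed

primrec qpochhammer_list :: "nat \<Rightarrow> int list" where
  "qpochhammer_list 0 = [1]"
| "qpochhammer_list (Suc i) = list_mult (qpochhammer_list i) (one_minus_X_power_list (Suc i))"

primrec qpochhammer_prod_list :: "nat \<Rightarrow> int list" where
  "qpochhammer_prod_list 0 = [1]"
| "qpochhammer_prod_list (Suc p) = list_mult (qpochhammer_prod_list p) (qpochhammer_list p)"

lemma fps_of_qpochhammer_list: "fps_of_list (qpochhammer_list i) = qpochhammer i"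
proof (induction i)
  case 0
  then show ?case by (simp add: qpochhammer_def fps_of_list_Cons fps_of_list_Nil)
next
  case (Suc i)
  have "{1..Suc i} = insert (Suc i) {1..i}" by auto
  with Suc show ?case
    by (simp add: qpochhammer_def fps_of_list_mult fps_of_list_one_minus_X_power mult.commute)
qed

lemma fps_of_qpochhammer_prod_list: "fps_of_list (qpochhammer_prod_list p) = qpochhammer_prod p"
  by (induction p)
    (simp_all add: qpochhammer_prod_def fps_of_list_Cons fps_of_list_Nil fps_of_list_mult
      fps_of_qpochhammer_list)

lemma qpochhammer_prod_list_2: "qpochhammer_prod_list 2 = [1, -1]"
  by (simp add: eval_nat_numeral one_minus_X_power_list_def)

lemma qpochhammer_prod_list_3: "qpochhammer_prod_list 3 = [1, -2, 0, 2, -1]"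
  by (simp add: eval_nat_numeral one_minus_X_power_list_def)

lemma qpochhammer_prod_list_5:
  "qpochhammer_prod_list 5 =
     [1, -4, 3, 6, -7, -2, -4, 10, 6, -10, 2, -10, 6, 10, -4, -2, -7, 6, 3, -4, 1]"
  by (simp add: eval_nat_numeral one_minus_X_power_list_def)

lemma qpochhammer_prod_list_7:
  "qpochhammer_prod_list 7 =
     [1, -6, 10, 6, -29, 10, 13, 22, -17, -46, 38, -34, 40, 50, -34, -34, -49, 46, -25, 50, 71,
      -2, -116, -62, 97, -68, 96, 36, 0, -36, -96, 68, -97, 62, 116, 2, -71, -50, 25, -46, 49,
      34, 34, -50, -40, 34, -38, 46, 17, -22, -13, -10, 29, -6, -10, 6, -1]"
  by (simp add: eval_nat_numeral one_minus_X_power_list_def)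

primrec dvd_at_residue :: "nat \<Rightarrow> nat \<Rightarrow> nat \<Rightarrow> int list \<Rightarrow> bool" where
  "dvd_at_residue p r i [] = True"
| "dvd_at_residue p r i (x # xs) \<longleftrightarrow>
     (i mod p = r \<longrightarrow> x mod int p = 0) \<and> dvd_at_residue p r (Suc i) xs"

lemma dvd_at_residue_nth:
  "dvd_at_residue p r i xs \<Longrightarrow> j < length xs \<Longrightarrow> (i + j) mod p = r \<Longrightarrow> int p dvd xs ! j"
proof (induction xs arbitrary: i j)
  case (Cons x xs)
  then show ?case by (cases j) auto
qed simp

lemma fps_nth_fps_of_list_mult:
  assumes "length cs \<le> Suc m"
  shows "fps_nth (fps_of_list cs * F) m = (\<Sum>i<length cs. cs ! i * fps_nth F (m - i))"
proof -
  have "fps_nth (fps_of_list cs * F) m = (\<Sum>i=0..m. fps_nth (fps_of_list cs) i * fps_nth F (m - i))"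
    by (simp add: fps_mult_nth)
  also have "\<dots> = (\<Sum>i<length cs. fps_nth (fps_of_list cs) i * fps_nth F (m - i))"
    by (rule sum.mono_neutral_right) (use assms in \<open>auto simp: fps_nth_fps_of_list\<close>)
  finally show ?thesis by (simp add: fps_nth_fps_of_list)
qed

text \<open>Since dilated_inv_qpochhammer p N is a series in q^p, only the coefficients of
  cs * qpochhammer_prod p in the residue class of m contribute modulo p.\<close>

theorem pl_prime_linear_cong:
  assumes p: "prime p" and len: "length cs \<le> Suc m"
    and check: "dvd_at_residue p (m mod p) 0 (list_mult cs (qpochhammer_prod_list p))"
  shows "int p dvd (\<Sum>i<length cs. cs ! i * int (pl p (m - i)))"
proof -
  define F where "F = qpochhammer_prod p * dilated_inv_qpochhammer p m"
  have "int p dvd (\<Sum>i<length cs. cs ! i * int (pl p (m - i)) - cs ! i * fps_nth F (m - i))"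
    unfolding right_diff_distrib[symmetric] F_def by (intro dvd_sum dvd_mult pl_prime_cong p) simp
  moreover have "(\<Sum>i<length cs. cs ! i * fps_nth F (m - i))
      = fps_nth (fps_of_list (list_mult cs (qpochhammer_prod_list p)) * dilated_inv_qpochhammer p m) m"
    using fps_nth_fps_of_list_mult[OF len, of F]
    by (simp add: F_def fps_of_list_mult fps_of_qpochhammer_prod_list mult.assoc)
  moreover have "int p dvd \<dots>"
  proof (rule dvd_fps_nth_mult_residue)
    fix i assume "i mod p = m mod p"
    then show "int p dvd fps_nth (fps_of_list (list_mult cs (qpochhammer_prod_list p))) i"
      using dvd_at_residue_nth[OF check, of i] by (simp add: fps_nth_fps_of_list)
  qed (rule fps_nth_dilated_inv_qpochhammer)
  ultimately show ?thesis
    by (simp add: sum_subtractf) (metis dvd_add diff_add_cancel)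
qed

lemma mod_eq_if_int_dvd_diff: "int p dvd int x - int y \<Longrightarrow> x mod p = y mod p"
  by (metis mod_eq_dvd_iff of_nat_eq_iff zmod_int)

lemma pl_2_cong: "pl 2 (2 * n + 1) mod 2 = pl 2 (2 * n) mod 2"
proof -
  have "int 2 dvd (\<Sum>i<length [1, -1::int]. [1, -1] ! i * int (pl 2 (2 * n + 1 - i)))"
    by (rule pl_prime_linear_cong) (simp_all add: qpochhammer_prod_list_2)
  then show ?thesis by (intro mod_eq_if_int_dvd_diff) (simp add: numeral_eq_Suc)
qed

lemma prime_3: "prime (3 :: nat)"
  by code_simp

lemma prime_5: "prime (5 :: nat)"
  by code_simp

lemma prime_7: "prime (7 :: nat)"
  by code_simp

lemma pl_3_cong_2: "pl 3 (3 * n + 2) mod 3 = 0"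
proof -
  have "(3 * n + 2) mod 3 = 2" by presburger
  then have "int 3 dvd (\<Sum>i<length [1::int]. [1] ! i * int (pl 3 (3 * n + 2 - i)))"
    by (intro pl_prime_linear_cong prime_3) (simp_all add: qpochhammer_prod_list_3)
  then have "int 3 dvd int (pl 3 (3 * n + 2))" by simp
  then have "3 dvd pl 3 (3 * n + 2)" by (simp only: int_dvd_int_iff)
  then show ?thesis by simp
qed

lemma pl_3_cong_1: "pl 3 (3 * n + 1) mod 3 = pl 3 (3 * n) mod 3"
proof -
  have "int 3 dvd (\<Sum>i<length [1, -1::int]. [1, -1] ! i * int (pl 3 (3 * n + 1 - i)))"
    by (intro pl_prime_linear_cong prime_3) (simp_all add: qpochhammer_prod_list_3)
  then show ?thesis by (intro mod_eq_if_int_dvd_diff) (simp add: numeral_eq_Suc)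
qed

lemma pl_5_cong_4: "pl 5 (5 * n + 2) mod 5 = pl 5 (5 * n + 4) mod 5"
proof -
  have "int 5 dvd (\<Sum>i<length [1, 0, -1::int]. [1, 0, -1] ! i * int (pl 5 (5 * n + 4 - i)))"
    by (intro pl_prime_linear_cong prime_5) (simp_all add: qpochhammer_prod_list_5)
  then have "int 5 dvd int (pl 5 (5 * n + 4)) - int (pl 5 (5 * n + 2))"
    by (simp add: numeral_eq_Suc)
  then show ?thesis by (intro mod_eq_if_int_dvd_diff[symmetric])
qed

lemma pl_5_cong_3: "pl 5 (5 * n + 1) mod 5 = pl 5 (5 * n + 3) mod 5"
proof -
  have "int 5 dvd (\<Sum>i<length [1, 0, -1::int]. [1, 0, -1] ! i * int (pl 5 (5 * n + 3 - i)))"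
    by (intro pl_prime_linear_cong prime_5) (simp_all add: qpochhammer_prod_list_5)
  then have "int 5 dvd int (pl 5 (5 * n + 3)) - int (pl 5 (5 * n + 1))"
    by (simp add: numeral_eq_Suc)
  then show ?thesis by (intro mod_eq_if_int_dvd_diff[symmetric])
qed

lemma pl_7_cong:
  "(pl 7 (7 * n + 2) + pl 7 (7 * n + 3)) mod 7 = (pl 7 (7 * n + 4) + pl 7 (7 * n + 5)) mod 7"
proof -
  have "int 7 dvd (\<Sum>i<length [1, 1, -1, -1::int].
      [1, 1, -1, -1] ! i * int (pl 7 (7 * n + 5 - i)))"
    by (intro pl_prime_linear_cong prime_7) (simp_all add: qpochhammer_prod_list_7)
  then have "int 7 dvd int (pl 7 (7 * n + 4) + pl 7 (7 * n + 5)) - int (pl 7 (7 * n + 2) + pl 7 (7 * n + 3))"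
    by (simp add: numeral_eq_Suc algebra_simps)
  then show ?thesis by (intro mod_eq_if_int_dvd_diff[symmetric])
qed

theorem theorem2:
  fixes n :: nat
  shows "pl 2 (2*n+1) mod 2 = pl 2 (2*n) mod 2 \<and>
         pl 3 (3*n+2) mod 3 = 0 \<and>
         pl 3 (3*n+1) mod 3 = pl 3 (3*n) mod 3 \<and>
         pl 5 (5*n+2) mod 5 = pl 5 (5*n+4) mod 5 \<and>
         pl 5 (5*n+1) mod 5 = pl 5 (5*n+3) mod 5 \<and>
         (pl 7 (7*n+2) + pl 7 (7*n+3)) mod 7 = (pl 7 (7*n+4) + pl 7 (7*n+5)) mod 7"
  using pl_2_cong pl_3_cong_2 pl_3_cong_1 pl_5_cong_4 pl_5_cong_3 pl_7_cong by blast

end
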